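(* Let $\Omega\subset\mathbb{R}^d$ be a bounded domain, $n\ge1$, let $k_{ij}=k_{ji}>0$ for $i\ne j$, $k_{ii}=0$ ($i,j=0,\ldots,n$), and let $q_{ij}=r_{ij}$ be symmetric nonnegative constants. Let $(u_i,v_i)_{i=0,\ldots,n}$ be a smooth solution of $$\partial_tu_i+\operatorname{div}(u_iv_i)=0,$$ $$\sum_{j=0}^nk_{ij}u_iu_j(v_i-v_j)=-\Big(\nabla(u_iq_i(u))-u_i\sum_{j=0}^n\nabla(u_jq_j(u))\Big)+\Big(r_i(u)\nabla u_i-u_i\nabla r_i(u)-u_i\sum_{j=0}^n\big(r_j(u)\nabla u_j-u_j\nabla r_j(u)\big)\Big),$$ $i=0,\ldots,n$, with $q_i(u)=\sum_jq_{ij}u_j$, $r_i(u)=\sum_jr_{ij}u_j$, $\sum_{i=0}^nu_i=1$, $\sum_{i=0}^nu_iv_i=0$, and no-flux boundary conditions $u_iv_i\cdot\nu=0$ on $\partial\Omega$. Then, with $h_R(u)=\frac12\sum_{i,j=0}^nq_{ij}u_iu_j$, $$\frac{d}{dt}\int_\Omega h_R(u)dx+\frac14\sum_{i,j=0}^n\int_\Omega k_{ij}u_iu_j|v_i-v_j|^2dx=0.$$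
   Context: $u_i$ are volume fractions, $v_i$ velocities of the phases, $\nu$ the outer unit normal; $k_{ij}$ are drag coefficients, $q_{ij},r_{ij}$ pressure coefficients. *)

theory Defs
  imports "HOL-Analysis.Analysis"
begin

text \<open>C^k and C^infinity regularity on a set U (meant for open U), via iterated
  Frechet derivatives in all directions.\<close>
fun Ck_on :: "nat \<Rightarrow> 'a::real_normed_vector set \<Rightarrow> ('a \<Rightarrow> 'b::real_normed_vector) \<Rightarrow> bool" where
  "Ck_on 0 U f = continuous_on U f"
| "Ck_on (Suc m) U f = (f differentiable_on U \<and> continuous_on U f \<and>
      (\<forall>e. Ck_on m U (\<lambda>x. frechet_derivative f (at x) e)))"

definition smooth_on :: "'a::real_normed_vector set \<Rightarrow> ('a \<Rightarrow> 'b::real_normed_vector) \<Rightarrow> bool" where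
  "smooth_on U f \<longleftrightarrow> (\<forall>m. Ck_on m U f)"

definition grad :: "(real^'d \<Rightarrow> real) \<Rightarrow> real^'d \<Rightarrow> real^'d" where
  "grad f x = (\<chi> k. frechet_derivative f (at x) (axis k 1))"

definition divergence :: "(real^'d \<Rightarrow> real^'d) \<Rightarrow> real^'d \<Rightarrow> real" where
  "divergence F x = (\<Sum>k\<in>UNIV. frechet_derivative (\<lambda>y. F y $ k) (at x) (axis k 1))"

text \<open>Bounded domain with C^1 boundary given by a defining function phi
  (Omega = {phi < 0}, grad phi nonzero on the boundary); nu is its outer unit normal.\<close>
definition outer_unit_normal :: "(real^'d) set \<Rightarrow> (real^'d \<Rightarrow> real^'d) \<Rightarrow> bool" where
  "outer_unit_normal \<Omega> \<nu> \<longleftrightarrow> (\<exists>\<phi>. Ck_on 1 UNIV \<phi> \<and> \<Omega> = {x. \<phi> x < 0} \<and>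
      (\<forall>x\<in>frontier \<Omega>. grad \<phi> x \<noteq> 0 \<and> \<nu> x = (1 / norm (grad \<phi> x)) *\<^sub>R grad \<phi> x))"

end

theory Submission
  imports Defs
begin

(* Differentiating under the integral, d/dt \<integral> h_R(u) = \<integral> \<Sigma>\<^sub>i q\<^sub>i(u) \<partial>\<^sub>t u\<^sub>i, and by mass
   conservation and the product rule for the divergence this equals
   \<integral> \<Sigma>\<^sub>i u\<^sub>i v\<^sub>i \<cdot> \<nabla>q\<^sub>i(u) - \<integral> div (\<Sigma>\<^sub>i q\<^sub>i(u) u\<^sub>i v\<^sub>i).
   The second integral vanishes by the divergence theorem and the no-flux condition. For r = q the
   right-hand side of the momentum balance collapses to 2 u\<^sub>i (\<Sigma>\<^sub>j u\<^sub>j \<nabla>q\<^sub>j(u) - \<nabla>q\<^sub>i(u));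
   pairing with v\<^sub>i, summing over i and using \<Sigma>\<^sub>i u\<^sub>i v\<^sub>i = 0 and the symmetry of k gives
   \<Sigma>\<^sub>i u\<^sub>i v\<^sub>i \<cdot> \<nabla>q\<^sub>i(u) = -1/4 \<Sigma>\<^sub>i\<^sub>j k\<^sub>i\<^sub>j u\<^sub>i u\<^sub>j |v\<^sub>i - v\<^sub>j|\<^sup>2.

   With
   \<Omega> = {\<phi> < 0} and a C\<^sup>1 cutoff \<chi>, integrating by parts gives
   \<integral> \<chi>(s\<phi>) div G = - \<integral> s \<chi>'(s\<phi>) \<nabla>\<phi> \<cdot> G. The integrand on the right lives in the
   boundary layer {-1/s < \<phi> < 0}, whose measure is O(1/s) because \<nabla>\<phi> \<noteq> 0 on the boundary,
   while \<nabla>\<phi> \<cdot> G is small there; so it tends to 0 as s \<rightarrow> \<infinity>. *)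

section \<open>Continuously differentiable maps with a given derivative\<close>

definition C1_on ::
    "'a::real_normed_vector set \<Rightarrow> ('a \<Rightarrow> 'b::real_normed_vector) \<Rightarrow> ('a \<Rightarrow> 'a \<Rightarrow> 'b) \<Rightarrow> bool"
  where "C1_on S f f' \<longleftrightarrow>
    (\<forall>x\<in>S. (f has_derivative f' x) (at x)) \<and> (\<forall>e. continuous_on S (\<lambda>x. f' x e))"

lemma C1_on_has_derivative: "C1_on S f f' \<Longrightarrow> x \<in> S \<Longrightarrow> (f has_derivative f' x) (at x)"
  by (simp add: C1_on_def)

lemma C1_on_continuous_derivative: "C1_on S f f' \<Longrightarrow> continuous_on S (\<lambda>x. f' x e)"
  by (simp add: C1_on_def)

lemma C1_on_imp_continuous_on: "C1_on S f f' \<Longrightarrow> continuous_on S f"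
  unfolding C1_on_def by (meson continuous_at_imp_continuous_on has_derivative_continuous)

lemma C1_on_subset: "C1_on T f f' \<Longrightarrow> S \<subseteq> T \<Longrightarrow> C1_on S f f'"
  by (auto simp: C1_on_def intro: continuous_on_subset)

lemma C1_on_const: "C1_on S (\<lambda>x. c) (\<lambda>x h. 0)"
  by (simp add: C1_on_def)

lemma C1_on_cmult:
  fixes f :: "'a::real_normed_vector \<Rightarrow> real"
  shows "C1_on S f f' \<Longrightarrow> C1_on S (\<lambda>x. c * f x) (\<lambda>x h. c * f' x h)"
  by (simp add: C1_on_def has_derivative_mult_right continuous_on_mult_left)

lemma C1_on_sum:
  "(\<And>i. i \<in> I \<Longrightarrow> C1_on S (f i) (f' i)) \<Longrightarrow>
    C1_on S (\<lambda>x. \<Sum>i\<in>I. f i x) (\<lambda>x h. \<Sum>i\<in>I. f' i x h)"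
  by (auto simp: C1_on_def intro!: has_derivative_sum continuous_intros)

lemma C1_on_mult:
  fixes f g :: "'a::real_normed_vector \<Rightarrow> real"
  assumes "C1_on S f f'" "C1_on S g g'"
  shows "C1_on S (\<lambda>x. f x * g x) (\<lambda>x h. f x * g' x h + f' x h * g x)"
  using assms C1_on_imp_continuous_on[OF assms(1)] C1_on_imp_continuous_on[OF assms(2)]
  by (auto simp: C1_on_def intro!: has_derivative_mult continuous_intros)

lemma C1_on_scaleR:
  fixes f :: "'a::real_normed_vector \<Rightarrow> real"
  assumes "C1_on S f f'" "C1_on S g g'"
  shows "C1_on S (\<lambda>x. f x *\<^sub>R g x) (\<lambda>x h. f x *\<^sub>R g' x h + f' x h *\<^sub>R g x)"
  using assms C1_on_imp_continuous_on[OF assms(1)] C1_on_imp_continuous_on[OF assms(2)]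
  by (auto simp: C1_on_def intro!: has_derivative_scaleR continuous_intros)

lemma C1_on_compose_real:
  assumes g: "\<And>y. (g has_real_derivative g' y) (at y)" "continuous_on UNIV g'"
    and f: "C1_on S f f'"
  shows "C1_on S (\<lambda>x. g (f x)) (\<lambda>x h. g' (f x) * f' x h)"
  unfolding C1_on_def
proof (intro conjI ballI allI)
  show "((\<lambda>x. g (f x)) has_derivative (\<lambda>h. g' (f x) * f' x h)) (at x)" if "x \<in> S" for x
    using has_derivative_compose[OF C1_on_has_derivative[OF f that] g(1)[unfolded has_field_derivative_def]]
    by (simp add: o_def)
  show "continuous_on S (\<lambda>x. g' (f x) * f' x e)" for e
    by (intro continuous_intros continuous_on_compose2[OF g(2) C1_on_imp_continuous_on[OF f]]
        C1_on_continuous_derivative[OF f]) auto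
qed

lemma C1_on_transform_open:
  assumes "C1_on S f f'" "open S" "\<And>x. x \<in> S \<Longrightarrow> g x = f x" "\<And>x h. x \<in> S \<Longrightarrow> g' x h = f' x h"
  shows "C1_on S g g'"
proof -
  have "g' x = f' x" if "x \<in> S" for x
    using assms(4)[OF that] by blast
  with assms show ?thesis
    unfolding C1_on_def
    by (auto intro: has_derivative_transform_within_open continuous_on_eq[of S "\<lambda>x. f' x _"])
qed

lemma C1_on_Un_open:
  "C1_on A f f' \<Longrightarrow> C1_on B f f' \<Longrightarrow> open A \<Longrightarrow> open B \<Longrightarrow> C1_on (A \<union> B) f f'"
  by (auto simp: C1_on_def intro: continuous_on_open_Un)

lemma Ck_on_1_imp_C1_on:
  assumes "Ck_on 1 U f" "open U"
  shows "C1_on U f (\<lambda>x. frechet_derivative f (at x))"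
  using assms
  by (auto simp: C1_on_def differentiable_on_eq_differentiable_at frechet_derivative_works)

lemma smooth_on_imp_C1_on:
  "smooth_on U f \<Longrightarrow> open U \<Longrightarrow> C1_on U f (\<lambda>x. frechet_derivative f (at x))"
  by (simp add: smooth_on_def Ck_on_1_imp_C1_on)

lemma C1_on_slice:
  assumes "C1_on U f f'"
  shows "C1_on {x. (t, x) \<in> U} (\<lambda>x. f (t, x)) (\<lambda>x h. f' (t, x) (0, h))"
  unfolding C1_on_def
proof (intro conjI ballI allI)
  fix x assume "x \<in> {x. (t, x) \<in> U}"
  then have "(f has_derivative f' (t, x)) (at (t, x))"
    by (simp add: C1_on_has_derivative[OF assms])
  moreover have "((\<lambda>y. (t, y)) has_derivative (\<lambda>h. (0, h))) (at x)"
    by (auto intro!: derivative_eq_intros)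
  ultimately show "((\<lambda>x. f (t, x)) has_derivative (\<lambda>h. f' (t, x) (0, h))) (at x)"
    by (rule has_derivative_compose[rotated])
next
  fix e
  show "continuous_on {x. (t, x) \<in> U} (\<lambda>x. f' (t, x) (0, e))"
    by (rule continuous_on_compose2[OF C1_on_continuous_derivative[OF assms]])
       (auto intro!: continuous_intros)
qed

lemma has_real_derivative_slice_fst:
  assumes "(f has_derivative f') (at (t, x))"
  shows "((\<lambda>s. f (s, x)) has_real_derivative f' (1, 0)) (at t)"
proof -
  have "((\<lambda>s. (s, x)) has_derivative (\<lambda>h. (h, 0))) (at t)"
    by (auto intro!: derivative_eq_intros)
  from has_derivative_compose[OF this assms]
  have "((\<lambda>s. f (s, x)) has_derivative (\<lambda>h. f' (h, 0))) (at t)"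
    by (simp add: o_def)
  moreover have "(\<lambda>h. f' (h, 0)) = (*) (f' (1, 0))"
  proof
    fix h :: real
    have "f' (h, 0) = f' (h *\<^sub>R (1, 0))" by simp
    also have "\<dots> = f' (1, 0) * h"
      by (simp only: linear_scale[OF has_derivative_linear[OF assms]] real_scaleR_def mult.commute)
    finally show "f' (h, 0) = f' (1, 0) * h" .
  qed
  ultimately show ?thesis
    by (simp add: has_field_derivative_def)
qed

section \<open>Gradient and divergence\<close>

lemma linear_eq_sum_axis:
  fixes L :: "real^'d \<Rightarrow> real"
  assumes "linear L"
  shows "L w = (\<Sum>k\<in>UNIV. w $ k * L (axis k 1))"
proof -
  have "L w = L (\<Sum>k\<in>UNIV. w $ k *\<^sub>R axis k 1)"
    using basis_expansion[of w] by (simp add: scalar_mult_eq_scaleR)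
  also have "\<dots> = (\<Sum>k\<in>UNIV. w $ k * L (axis k 1))"
    by (simp add: linear_sum[OF assms] linear_scale[OF assms])
  finally show ?thesis .
qed

lemma grad_eq_derivative:
  "(f has_derivative f') (at x) \<Longrightarrow> grad f x = (\<chi> k. f' (axis k 1))"
  using frechet_derivative_at by (fastforce simp: grad_def)

lemma derivative_eq_inner_grad:
  assumes "(f has_derivative f') (at x)"
  shows "f' h = grad f x \<bullet> h"
  by (subst linear_eq_sum_axis[OF has_derivative_linear[OF assms]])
     (simp add: grad_eq_derivative[OF assms] inner_vec_def mult.commute)

lemma divergence_eq_derivative:
  fixes F :: "real^'d \<Rightarrow> real^'d"
  assumes "(F has_derivative F') (at x)"
  shows "divergence F x = (\<Sum>k\<in>UNIV. F' (axis k 1) $ k)"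
proof -
  have "((\<lambda>y. F y $ k) has_derivative (\<lambda>h. F' h $ k)) (at x)" for k
    by (rule bounded_linear.has_derivative[OF bounded_linear_vec_nth assms])
  then have "frechet_derivative (\<lambda>y. F y $ k) (at x) = (\<lambda>h. F' h $ k)" for k
    by (rule frechet_derivative_at[symmetric])
  then show ?thesis
    by (simp add: divergence_def)
qed

lemma grad_mult:
  fixes f g :: "real^'d \<Rightarrow> real"
  assumes "f differentiable (at x)" "g differentiable (at x)"
  shows "grad (\<lambda>y. f y * g y) x = f x *\<^sub>R grad g x + g x *\<^sub>R grad f x"
proof -
  from assms obtain f' g' where f': "(f has_derivative f') (at x)" and g': "(g has_derivative g') (at x)"
    by (auto simp: differentiable_def)
  show ?thesis
    by (simp add: grad_eq_derivative[OF has_derivative_mult[OF f' g']] grad_eq_derivative[OF f']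
        grad_eq_derivative[OF g'] vec_eq_iff)
qed

lemma divergence_sum:
  fixes F :: "'i \<Rightarrow> real^'d \<Rightarrow> real^'d"
  assumes "\<And>i. i \<in> I \<Longrightarrow> F i differentiable (at x)"
  shows "divergence (\<lambda>y. \<Sum>i\<in>I. F i y) x = (\<Sum>i\<in>I. divergence (F i) x)"
proof -
  have F': "(F i has_derivative frechet_derivative (F i) (at x)) (at x)" if "i \<in> I" for i
    using assms[OF that] by (simp add: frechet_derivative_works)
  have "((\<lambda>y. \<Sum>i\<in>I. F i y) has_derivative (\<lambda>h. \<Sum>i\<in>I. frechet_derivative (F i) (at x) h)) (at x)"
    by (intro has_derivative_sum F')
  then have "divergence (\<lambda>y. \<Sum>i\<in>I. F i y) x
      = (\<Sum>k\<in>UNIV. \<Sum>i\<in>I. frechet_derivative (F i) (at x) (axis k 1) $ k)"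
    by (simp add: divergence_eq_derivative sum_component)
  also have "\<dots> = (\<Sum>i\<in>I. divergence (F i) x)"
    by (subst sum.swap) (simp add: divergence_eq_derivative[OF F'])
  finally show ?thesis .
qed

lemma divergence_scaleR:
  fixes f :: "real^'d \<Rightarrow> real" and F :: "real^'d \<Rightarrow> real^'d"
  assumes "f differentiable (at x)" "F differentiable (at x)"
  shows "divergence (\<lambda>y. f y *\<^sub>R F y) x = f x * divergence F x + F x \<bullet> grad f x"
proof -
  from assms obtain f' F' where f': "(f has_derivative f') (at x)" and F': "(F has_derivative F') (at x)"
    by (auto simp: differentiable_def)
  show ?thesis
    by (simp add: divergence_eq_derivative[OF has_derivative_scaleR[OF f' F']]
        divergence_eq_derivative[OF F'] grad_eq_derivative[OF f'] inner_vec_def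
        sum.distrib sum_distrib_left mult.commute)
qed

section \<open>The pointwise energy identity\<close>

(* With g i = \<nabla>u\<^sub>i, p i = q\<^sub>i(u) and Q i = \<nabla>q\<^sub>i(u), the left-hand side is the
   right-hand side of the momentum balance for r = q. *)
lemma pressure_terms_eq:
  fixes Q g :: "nat \<Rightarrow> 'a::real_vector" and U p :: "nat \<Rightarrow> real"
  shows "- ((U i *\<^sub>R Q i + p i *\<^sub>R g i) - U i *\<^sub>R (\<Sum>j\<le>n. U j *\<^sub>R Q j + p j *\<^sub>R g j))
      + ((p i *\<^sub>R g i - U i *\<^sub>R Q i) - U i *\<^sub>R (\<Sum>j\<le>n. p j *\<^sub>R g j - U j *\<^sub>R Q j))
    = (2 * U i) *\<^sub>R ((\<Sum>j\<le>n. U j *\<^sub>R Q j) - Q i)"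
proof -
  define S where "S = (\<Sum>j\<le>n. U j *\<^sub>R Q j)"
  define P where "P = (\<Sum>j\<le>n. p j *\<^sub>R g j)"
  have sums: "(\<Sum>j\<le>n. U j *\<^sub>R Q j + p j *\<^sub>R g j) = S + P"
    "(\<Sum>j\<le>n. p j *\<^sub>R g j - U j *\<^sub>R Q j) = P - S"
    by (simp_all add: S_def P_def sum.distrib sum_subtractf)
  show ?thesis
    unfolding sums S_def[symmetric] mult_2 scaleR_add_left by (simp add: algebra_simps)
qed

lemma friction_power_eq:
  fixes k :: "nat \<Rightarrow> nat \<Rightarrow> real" and U :: "nat \<Rightarrow> real" and V :: "nat \<Rightarrow> 'a::real_inner"
  assumes "\<And>i j. i \<le> n \<Longrightarrow> j \<le> n \<Longrightarrow> k i j = k j i"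
  shows "(\<Sum>i\<le>n. V i \<bullet> (\<Sum>j\<le>n. (k i j * U i * U j) *\<^sub>R (V i - V j)))
    = (1/2) * (\<Sum>i\<le>n. \<Sum>j\<le>n. k i j * U i * U j * (norm (V i - V j))\<^sup>2)"
proof -
  define a where "a i j = k i j * U i * U j * (V i \<bullet> (V i - V j))" for i j
  have "a i j + a j i = k i j * U i * U j * (norm (V i - V j))\<^sup>2" if "i \<le> n" "j \<le> n" for i j
    using assms[OF that]
    by (simp add: a_def power2_norm_eq_inner inner_diff_left inner_diff_right inner_commute algebra_simps)
  then have "(\<Sum>i\<le>n. \<Sum>j\<le>n. a i j + a j i) = (\<Sum>i\<le>n. \<Sum>j\<le>n. k i j * U i * U j * (norm (V i - V j))\<^sup>2)"
    by simp
  moreover have "(\<Sum>i\<le>n. \<Sum>j\<le>n. a i j + a j i) = 2 * (\<Sum>i\<le>n. \<Sum>j\<le>n. a i j)"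
    by (simp only: sum.distrib sum.swap[of "\<lambda>i j. a j i"] mult_2)
  ultimately have "2 * (\<Sum>i\<le>n. \<Sum>j\<le>n. a i j) = (\<Sum>i\<le>n. \<Sum>j\<le>n. k i j * U i * U j * (norm (V i - V j))\<^sup>2)"
    by simp
  then show ?thesis
    by (simp add: a_def inner_sum_right)
qed

definition momentum_rhs ::
    "(nat \<Rightarrow> nat \<Rightarrow> real) \<Rightarrow> (nat \<Rightarrow> nat \<Rightarrow> real) \<Rightarrow> nat \<Rightarrow> (nat \<Rightarrow> real^'d \<Rightarrow> real) \<Rightarrow> nat \<Rightarrow> real^'d \<Rightarrow> real^'d"
  where "momentum_rhs q r n U i x =
    - (grad (\<lambda>y. U i y * (\<Sum>l\<le>n. q i l * U l y)) x
       - U i x *\<^sub>R (\<Sum>j\<le>n. grad (\<lambda>y. U j y * (\<Sum>l\<le>n. q j l * U l y)) x))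
    + ((\<Sum>l\<le>n. r i l * U l x) *\<^sub>R grad (U i) x
       - U i x *\<^sub>R grad (\<lambda>y. \<Sum>l\<le>n. r i l * U l y) x
       - U i x *\<^sub>R (\<Sum>j\<le>n. (\<Sum>l\<le>n. r j l * U l x) *\<^sub>R grad (U j) x
             - U j x *\<^sub>R grad (\<lambda>y. \<Sum>l\<le>n. r j l * U l y) x))"

lemma momentum_rhs_eq:
  fixes U :: "nat \<Rightarrow> real^'d \<Rightarrow> real"
  assumes U_diff: "\<And>i. i \<le> n \<Longrightarrow> U i differentiable (at x)"
    and r_eq_q: "\<And>i j. i \<le> n \<Longrightarrow> j \<le> n \<Longrightarrow> r i j = q i j" and i: "i \<le> n"
  shows "momentum_rhs q r n U i x = (2 * U i x) *\<^sub>R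
    ((\<Sum>j\<le>n. U j x *\<^sub>R grad (\<lambda>y. \<Sum>l\<le>n. q j l * U l y) x) - grad (\<lambda>y. \<Sum>l\<le>n. q i l * U l y) x)"
proof -
  define p where "p i y = (\<Sum>l\<le>n. q i l * U l y)" for i y
  define Q where "Q i = grad (p i) x" for i
  have p_diff: "p i differentiable (at x)" for i
    unfolding p_def by (auto intro!: derivative_intros U_diff)
  have r_p: "(\<Sum>l\<le>n. r i l * U l y) = p i y" if "i \<le> n" for i y
    using that by (auto simp: p_def r_eq_q intro!: sum.cong)
  have Up_grad: "grad (\<lambda>y. U i y * p i y) x = U i x *\<^sub>R Q i + p i x *\<^sub>R grad (U i) x" if "i \<le> n" for i
    unfolding Q_def by (rule grad_mult[OF U_diff[OF that] p_diff])
  have sum_Up_grad: "(\<Sum>j\<le>n. grad (\<lambda>y. U j y * p j y) x)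
      = (\<Sum>j\<le>n. U j x *\<^sub>R Q j + p j x *\<^sub>R grad (U j) x)"
    by (rule sum.cong) (simp_all add: Up_grad)
  have sum_r_p: "(\<Sum>j\<le>n. (\<Sum>l\<le>n. r j l * U l x) *\<^sub>R grad (U j) x
        - U j x *\<^sub>R grad (\<lambda>y. \<Sum>l\<le>n. r j l * U l y) x)
      = (\<Sum>j\<le>n. p j x *\<^sub>R grad (U j) x - U j x *\<^sub>R Q j)"
    by (rule sum.cong) (simp_all add: r_p Q_def)
  have "momentum_rhs q r n U i x
      = - ((U i x *\<^sub>R Q i + p i x *\<^sub>R grad (U i) x)
           - U i x *\<^sub>R (\<Sum>j\<le>n. U j x *\<^sub>R Q j + p j x *\<^sub>R grad (U j) x))
        + ((p i x *\<^sub>R grad (U i) x - U i x *\<^sub>R Q i)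
           - U i x *\<^sub>R (\<Sum>j\<le>n. p j x *\<^sub>R grad (U j) x - U j x *\<^sub>R Q j))"
    unfolding momentum_rhs_def p_def[symmetric] r_p[OF i] Q_def[symmetric] Up_grad[OF i] sum_Up_grad sum_r_p ..
  also have "\<dots> = (2 * U i x) *\<^sub>R ((\<Sum>j\<le>n. U j x *\<^sub>R Q j) - Q i)"
    by (rule pressure_terms_eq)
  finally show ?thesis
    by (simp add: Q_def p_def[abs_def])
qed

lemma dissipation_eq:
  fixes k :: "nat \<Rightarrow> nat \<Rightarrow> real" and U :: "nat \<Rightarrow> real" and V Q :: "nat \<Rightarrow> 'a::real_inner"
  assumes k_sym: "\<And>i j. i \<le> n \<Longrightarrow> j \<le> n \<Longrightarrow> k i j = k j i"
    and flux: "(\<Sum>i\<le>n. U i *\<^sub>R V i) = 0"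
    and friction: "\<And>i. i \<le> n \<Longrightarrow>
      (\<Sum>j\<le>n. (k i j * U i * U j) *\<^sub>R (V i - V j)) = (2 * U i) *\<^sub>R ((\<Sum>j\<le>n. U j *\<^sub>R Q j) - Q i)"
  shows "(\<Sum>i\<le>n. U i * (V i \<bullet> Q i)) = - (1/4) * (\<Sum>i\<le>n. \<Sum>j\<le>n. k i j * U i * U j * (norm (V i - V j))\<^sup>2)"
proof -
  define W where "W = (\<Sum>j\<le>n. U j *\<^sub>R Q j)"
  have "(\<Sum>i\<le>n. V i \<bullet> ((2 * U i) *\<^sub>R (W - Q i)))
      = 2 * ((\<Sum>i\<le>n. U i *\<^sub>R V i) \<bullet> W) - 2 * (\<Sum>i\<le>n. U i * (V i \<bullet> Q i))"
    by (simp add: inner_diff_right inner_sum_left sum_subtractf sum_distrib_left algebra_simps)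
  moreover have "(\<Sum>i\<le>n. V i \<bullet> ((2 * U i) *\<^sub>R (W - Q i)))
      = (\<Sum>i\<le>n. V i \<bullet> (\<Sum>j\<le>n. (k i j * U i * U j) *\<^sub>R (V i - V j)))"
    by (rule sum.cong) (simp_all add: friction W_def)
  also have "\<dots> = (1/2) * (\<Sum>i\<le>n. \<Sum>j\<le>n. k i j * U i * U j * (norm (V i - V j))\<^sup>2)"
    by (rule friction_power_eq) (rule k_sym)
  ultimately show ?thesis
    using flux by simp
qed

lemma divergence_sum_scaleR:
  fixes p U :: "'i \<Rightarrow> real^'d \<Rightarrow> real" and V :: "'i \<Rightarrow> real^'d \<Rightarrow> real^'d"
  assumes "\<And>i. i \<in> I \<Longrightarrow> p i differentiable (at x)" "\<And>i. i \<in> I \<Longrightarrow> U i differentiable (at x)"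
    "\<And>i. i \<in> I \<Longrightarrow> V i differentiable (at x)"
  shows "divergence (\<lambda>y. \<Sum>i\<in>I. p i y *\<^sub>R (U i y *\<^sub>R V i y)) x
    = (\<Sum>i\<in>I. p i x * divergence (\<lambda>y. U i y *\<^sub>R V i y) x + U i x * (V i x \<bullet> grad (p i) x))"
proof -
  have "divergence (\<lambda>y. \<Sum>i\<in>I. p i y *\<^sub>R (U i y *\<^sub>R V i y)) x
      = (\<Sum>i\<in>I. divergence (\<lambda>y. p i y *\<^sub>R (U i y *\<^sub>R V i y)) x)"
    using assms by (intro divergence_sum) (auto intro!: derivative_intros)
  also have "\<dots> = (\<Sum>i\<in>I. p i x * divergence (\<lambda>y. U i y *\<^sub>R V i y) x + U i x * (V i x \<bullet> grad (p i) x))"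
  proof (rule sum.cong)
    fix i assume "i \<in> I"
    then show "divergence (\<lambda>y. p i y *\<^sub>R (U i y *\<^sub>R V i y)) x
        = p i x * divergence (\<lambda>y. U i y *\<^sub>R V i y) x + U i x * (V i x \<bullet> grad (p i) x)"
      using assms by (subst divergence_scaleR) (auto intro!: derivative_intros)
  qed simp
  finally show ?thesis .
qed

lemma local_energy_identity:
  fixes U :: "nat \<Rightarrow> real^'d \<Rightarrow> real" and V :: "nat \<Rightarrow> real^'d \<Rightarrow> real^'d"
    and k q r :: "nat \<Rightarrow> nat \<Rightarrow> real" and a :: "nat \<Rightarrow> real"
  assumes U_diff: "\<And>i. i \<le> n \<Longrightarrow> U i differentiable (at x)"
    and V_diff: "\<And>i. i \<le> n \<Longrightarrow> V i differentiable (at x)"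
    and k_sym: "\<And>i j. i \<le> n \<Longrightarrow> j \<le> n \<Longrightarrow> k i j = k j i"
    and r_eq_q: "\<And>i j. i \<le> n \<Longrightarrow> j \<le> n \<Longrightarrow> r i j = q i j"
    and mass: "\<And>i. i \<le> n \<Longrightarrow> a i + divergence (\<lambda>y. U i y *\<^sub>R V i y) x = 0"
    and momentum: "\<And>i. i \<le> n \<Longrightarrow>
      (\<Sum>j\<le>n. (k i j * U i x * U j x) *\<^sub>R (V i x - V j x)) = momentum_rhs q r n U i x"
    and flux: "(\<Sum>i\<le>n. U i x *\<^sub>R V i x) = 0"
  shows "(\<Sum>i\<le>n. a i * (\<Sum>l\<le>n. q i l * U l x))
    = - (1/4) * (\<Sum>i\<le>n. \<Sum>j\<le>n. k i j * U i x * U j x * (norm (V i x - V j x))\<^sup>2)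
      - divergence (\<lambda>y. \<Sum>i\<le>n. (\<Sum>l\<le>n. q i l * U l y) *\<^sub>R (U i y *\<^sub>R V i y)) x"
proof -
  define p where "p i y = (\<Sum>l\<le>n. q i l * U l y)" for i y
  have p_diff: "p i differentiable (at x)" for i
    unfolding p_def by (auto intro!: derivative_intros U_diff)
  have friction: "(\<Sum>j\<le>n. (k i j * U i x * U j x) *\<^sub>R (V i x - V j x))
      = (2 * U i x) *\<^sub>R ((\<Sum>j\<le>n. U j x *\<^sub>R grad (p j) x) - grad (p i) x)" if "i \<le> n" for i
    using momentum[OF that] momentum_rhs_eq[OF U_diff r_eq_q that] by (simp add: p_def[abs_def])
  have "(\<Sum>i\<le>n. U i x * (V i x \<bullet> grad (p i) x))
      = - (1/4) * (\<Sum>i\<le>n. \<Sum>j\<le>n. k i j * U i x * U j x * (norm (V i x - V j x))\<^sup>2)"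
    using k_sym flux friction by (rule dissipation_eq)
  moreover have "(\<Sum>i\<le>n. a i * p i x) = (\<Sum>i\<le>n. - (p i x * divergence (\<lambda>y. U i y *\<^sub>R V i y) x))"
    by (rule sum.cong) (simp_all add: mass[THEN eq_neg_iff_add_eq_0[THEN iffD2]])
  moreover have "divergence (\<lambda>y. \<Sum>i\<le>n. p i y *\<^sub>R (U i y *\<^sub>R V i y)) x
      = (\<Sum>i\<le>n. p i x * divergence (\<lambda>y. U i y *\<^sub>R V i y) x + U i x * (V i x \<bullet> grad (p i) x))"
    by (rule divergence_sum_scaleR) (simp_all add: p_diff U_diff V_diff)
  ultimately show ?thesis
    by (simp add: p_def sum.distrib sum_negf)
qed

section \<open>Differentiation under the integral sign\<close>

lemma integrable_continuous_on_compact_superset: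
  fixes f :: "'a::euclidean_space \<Rightarrow> real"
  assumes "continuous_on C f" "compact C" "S \<subseteq> C" "S \<in> sets lebesgue"
  shows "f integrable_on S"
proof -
  obtain B where B: "\<And>x. x \<in> C \<Longrightarrow> norm (f x) \<le> B"
    using compact_imp_bounded[OF compact_continuous_image[OF assms(1,2)]]
    unfolding bounded_iff by auto
  have "S \<in> lmeasurable"
    using assms by (meson bounded_set_imp_lmeasurable bounded_subset compact_imp_bounded)
  show ?thesis
  proof (rule measurable_bounded_by_integrable_imp_integrable[where g="\<lambda>x. B"])
    show "f \<in> borel_measurable (lebesgue_on S)"
      using assms by (meson continuous_imp_measurable_on_sets_lebesgue continuous_on_subset)
    show "(\<lambda>x. B) integrable_on S"
      using \<open>S \<in> lmeasurable\<close> by (rule integrable_on_const)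
  qed (use assms B in auto)
qed

lemma tendsto_integral_uniform_limit:
  fixes f :: "'i \<Rightarrow> 'a::euclidean_space \<Rightarrow> real"
  assumes lim: "uniform_limit S f g F" and S: "S \<in> lmeasurable"
    and int: "\<forall>\<^sub>F i in F. f i integrable_on S" "g integrable_on S"
  shows "((\<lambda>i. integral S (f i)) \<longlongrightarrow> integral S g) F"
proof (rule tendstoI)
  fix e :: real assume "e > 0"
  define \<eta> where "\<eta> = e / (measure lebesgue S + 1)"
  have "measure lebesgue S + 1 > 0"
    using measure_nonneg[of lebesgue S] by linarith
  then have "\<eta> > 0" "\<eta> * measure lebesgue S < e"
    using \<open>e > 0\<close> by (simp_all add: \<eta>_def field_simps)
  show "\<forall>\<^sub>F i in F. dist (integral S (f i)) (integral S g) < e"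
    using uniform_limitD[OF lim \<open>\<eta> > 0\<close>] int(1)
  proof eventually_elim
    case (elim i)
    have "norm (integral S (\<lambda>x. f i x - g x)) \<le> integral S (\<lambda>x. \<eta>)"
      using elim by (intro integral_norm_bound_integral integrable_diff integrable_on_const S int(2))
        (auto simp: dist_norm less_imp_le)
    also have "\<dots> = \<eta> * measure lebesgue S"
      by (simp add: lmeasure_integral[OF S] integral_mult_right[symmetric] del: integral_mult_right)
    finally show ?case
      using \<open>\<eta> * measure lebesgue S < e\<close> elim(2) int(2) by (simp add: dist_norm integral_diff)
  qed
qed

lemma uniform_limit_difference_quotient:
  fixes F :: "real \<times> 'a::real_normed_vector \<Rightarrow> real"
  assumes F: "C1_on U F F'" and K: "{a<..<b} \<times> K \<subseteq> U" "compact K" and t: "t \<in> {a<..<b}"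
  shows "uniform_limit K (\<lambda>y x. (F (y, x) - F (t, x)) / (y - t)) (\<lambda>x. F' (t, x) (1, 0)) (at t)"
  unfolding uniform_limit_at_le_iff
proof (intro allI impI)
  fix e :: real assume "e > 0"
  define a' b' where "a' = (a + t) / 2" and "b' = (t + b) / 2"
  have ab': "a < a'" "a' < t" "t < b'" "b' < b"
    using t by (auto simp: a'_def b'_def)
  have "continuous_on ({a'..b'} \<times> K) (\<lambda>p. F' p (1, 0))"
    by (rule continuous_on_subset[OF C1_on_continuous_derivative[OF F]]) (use K ab' in auto)
  then have "uniformly_continuous_on ({a'..b'} \<times> K) (\<lambda>p. F' p (1, 0))"
    using K by (intro compact_uniformly_continuous compact_Times) auto
  then obtain \<delta> where \<delta>: "\<delta> > 0" "\<And>p p'. p \<in> {a'..b'} \<times> K \<Longrightarrow> p' \<in> {a'..b'} \<times> K \<Longrightarrow>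
      dist p' p < \<delta> \<Longrightarrow> dist (F' p' (1, 0)) (F' p (1, 0)) < e"
    unfolding uniformly_continuous_on_def using \<open>e > 0\<close> by metis
  show "\<exists>d>0. \<forall>y. 0 < dist y t \<and> dist y t < d \<longrightarrow>
      (\<forall>x\<in>K. dist ((F (y, x) - F (t, x)) / (y - t)) (F' (t, x) (1, 0)) \<le> e)"
  proof (intro exI[of _ "min \<delta> (min (t - a') (b' - t))"] conjI allI impI ballI)
    fix y x assume y: "0 < dist y t \<and> dist y t < min \<delta> (min (t - a') (b' - t))" and x: "x \<in> K"
    define g where "g s = F (s, x) - F' (t, x) (1, 0) * s" for s
    have seg: "closed_segment t y \<subseteq> {a'..b'}"
      using y ab' by (auto simp: closed_segment_eq_real_ivl dist_real_def split: if_splits)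
    have "(g has_real_derivative F' (s, x) (1, 0) - F' (t, x) (1, 0)) (at s within closed_segment t y)"
      if "s \<in> closed_segment t y" for s
    proof -
      have "(s, x) \<in> U"
        using that seg ab' x K(1) by force
      then have "((\<lambda>s. F (s, x)) has_real_derivative F' (s, x) (1, 0)) (at s)"
        by (intro has_real_derivative_slice_fst C1_on_has_derivative[OF F])
      from DERIV_diff[OF this DERIV_cmult_Id] show ?thesis
        unfolding g_def by (rule has_field_derivative_at_within)
    qed
    moreover have "norm (F' (s, x) (1, 0) - F' (t, x) (1, 0)) \<le> e" if "s \<in> closed_segment t y" for s
    proof -
      have "dist s t < \<delta>"
        using that y segment_bound(1)[OF that] by (simp add: dist_real_def)
      then show ?thesis
        using \<delta>(2)[of "(t, x)" "(s, x)"] that seg x ab'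
        by (force simp: dist_Pair_Pair dist_norm)
    qed
    ultimately have "norm (g y - g t) \<le> e * norm (y - t)"
      by (intro field_differentiable_bound[OF convex_closed_segment]) auto
    moreover have "y \<noteq> t"
      using y by simp
    then have "(F (y, x) - F (t, x)) / (y - t) - F' (t, x) (1, 0) = (g y - g t) / (y - t)"
      by (simp add: g_def field_simps)
    ultimately show "dist ((F (y, x) - F (t, x)) / (y - t)) (F' (t, x) (1, 0)) \<le> e"
      using \<open>y \<noteq> t\<close> by (simp add: dist_norm norm_divide pos_divide_le_eq)
  qed (use \<delta> ab' in auto)
qed

lemma has_real_derivative_integral:
  fixes F :: "real \<times> 'a::euclidean_space \<Rightarrow> real"
  assumes F: "C1_on U F F'" and K: "{a<..<b} \<times> K \<subseteq> U" "compact K"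
    and S: "S \<subseteq> K" "S \<in> lmeasurable" and t: "t \<in> {a<..<b}"
  shows "((\<lambda>s. integral S (\<lambda>x. F (s, x))) has_real_derivative integral S (\<lambda>x. F' (t, x) (1, 0))) (at t)"
proof -
  have S_leb: "S \<in> sets lebesgue"
    using S(2) by (rule fmeasurableD)
  have int: "(\<lambda>x. F (s, x)) integrable_on S" if "s \<in> {a<..<b}" for s
  proof (rule integrable_continuous_on_compact_superset[OF _ K(2) S(1) S_leb])
    show "continuous_on K (\<lambda>x. F (s, x))"
      by (rule continuous_on_compose2[OF C1_on_imp_continuous_on[OF F]])
         (use K that in \<open>auto intro!: continuous_intros\<close>)
  qed
  have int': "(\<lambda>x. F' (t, x) (1, 0)) integrable_on S"
  proof (rule integrable_continuous_on_compact_superset[OF _ K(2) S(1) S_leb])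
    show "continuous_on K (\<lambda>x. F' (t, x) (1, 0))"
      by (rule continuous_on_compose2[OF C1_on_continuous_derivative[OF F]])
         (use K t in \<open>auto intro!: continuous_intros\<close>)
  qed
  have near_t: "\<forall>\<^sub>F y in at t. y \<in> {a<..<b}"
    using t by (intro eventually_at_in_open') auto
  have "((\<lambda>y. integral S (\<lambda>x. (F (y, x) - F (t, x)) / (y - t)))
      \<longlongrightarrow> integral S (\<lambda>x. F' (t, x) (1, 0))) (at t)"
  proof (rule tendsto_integral_uniform_limit[OF _ S(2) _ int'])
    show "uniform_limit S (\<lambda>y x. (F (y, x) - F (t, x)) / (y - t)) (\<lambda>x. F' (t, x) (1, 0)) (at t)"
      by (rule uniform_limit_on_subset[OF uniform_limit_difference_quotient[OF F K t] S(1)])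
    show "\<forall>\<^sub>F y in at t. (\<lambda>x. (F (y, x) - F (t, x)) / (y - t)) integrable_on S"
      using near_t by eventually_elim (intro integrable_on_divide integrable_diff int t)
  qed
  moreover have "\<forall>\<^sub>F y in at t. integral S (\<lambda>x. (F (y, x) - F (t, x)) / (y - t))
      = (integral S (\<lambda>x. F (y, x)) - integral S (\<lambda>x. F (t, x))) / (y - t)"
    using near_t
  proof eventually_elim
    case (elim y)
    show ?case
      using integral_diff[OF int[OF elim] int[OF t]] by simp
  qed
  ultimately show ?thesis
    unfolding has_field_derivative_iff by (rule Lim_transform_eventually)
qed

section \<open>The divergence theorem for tangential fields\<close>

lemma has_integral_shift:
  fixes f :: "'a::euclidean_space \<Rightarrow> real"
  assumes "(f has_integral i) (cbox a b)" "\<And>x. x \<notin> cbox a b \<Longrightarrow> f x = 0"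
  shows "((\<lambda>x. f (x + c)) has_integral i) UNIV"
proof -
  have "((\<lambda>x. f (1 *\<^sub>R x + c)) has_integral (1 / (\<bar>1\<bar> ^ DIM('a))) *\<^sub>R i)
      ((\<lambda>x. (1 / 1) *\<^sub>R x + -((1 / 1) *\<^sub>R c)) ` cbox a b)"
    by (rule has_integral_affinity[OF assms(1)]) simp
  then have "((\<lambda>x. f (x + c)) has_integral i) ((\<lambda>x. x - c) ` cbox a b)"
    by simp
  then show ?thesis
  proof (rule has_integral_on_superset)
    fix x assume "x \<notin> (\<lambda>x. x - c) ` cbox a b"
    then have "x + c \<notin> cbox a b"
      by (metis add_diff_cancel image_eqI)
    then show "f (x + c) = 0"
      by (rule assms(2))
  qed simp
qed

lemma has_derivative_eq_0_if_vanishing: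
  assumes "(f has_derivative f') (at x)" "open S" "x \<in> S" "\<And>y. y \<in> S \<Longrightarrow> f y = 0"
  shows "f' h = 0"
proof -
  have "((\<lambda>_. 0) has_derivative f') (at x)"
    using assms by (intro has_derivative_transform_within_open[OF assms(1,2,3)]) auto
  then show ?thesis
    using has_derivative_unique[OF has_derivative_const] by (metis (full_types))
qed

lemma has_real_derivative_integral_translate:
  fixes f :: "'a::euclidean_space \<Rightarrow> real"
  assumes f: "C1_on UNIV f f'"
  shows "((\<lambda>s. integral (cbox a b) (\<lambda>x. f (x + s *\<^sub>R e))) has_real_derivative
    integral (cbox a b) (\<lambda>x. f' x e)) (at 0)"
proof -
  have "((\<lambda>s. integral (cbox a b) (\<lambda>x. f (x + s *\<^sub>R e))) has_real_derivative
      integral (cbox a b) (\<lambda>x. f' (x + 0 *\<^sub>R e) e)) (at 0 within ball 0 1)"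
  proof (rule leibniz_rule_field_derivative)
    fix s :: real and x :: 'a
    have "((\<lambda>s. x + s *\<^sub>R e) has_derivative (\<lambda>h. h *\<^sub>R e)) (at s)"
      by (auto intro!: derivative_eq_intros)
    from has_derivative_compose[OF this C1_on_has_derivative[OF f]]
    have "((\<lambda>s. f (x + s *\<^sub>R e)) has_derivative (\<lambda>h. f' (x + s *\<^sub>R e) (h *\<^sub>R e))) (at s)"
      by simp
    moreover have "(\<lambda>h. f' (x + s *\<^sub>R e) (h *\<^sub>R e)) = (*) (f' (x + s *\<^sub>R e) e)"
      by (rule ext) (simp add: linear_scale[OF has_derivative_linear[OF C1_on_has_derivative[OF f UNIV_I]]])
    ultimately show "((\<lambda>s. f (x + s *\<^sub>R e)) has_real_derivative f' (x + s *\<^sub>R e) e) (at s within ball 0 1)"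
      by (simp add: has_field_derivative_def has_derivative_at_withinI)
  next
    show "(\<lambda>x. f (x + s *\<^sub>R e)) integrable_on cbox a b" for s
      by (rule integrable_continuous, rule continuous_on_compose2[OF C1_on_imp_continuous_on[OF f]])
         (auto intro!: continuous_intros)
    show "continuous_on (ball 0 1 \<times> cbox a b) (\<lambda>(s, x). f' (x + s *\<^sub>R e) e)"
      unfolding case_prod_beta
      by (rule continuous_on_compose2[OF C1_on_continuous_derivative[OF f]]) (auto intro!: continuous_intros)
  qed auto
  moreover have "at (0::real) within ball 0 1 = at 0"
    by (rule at_within_open) auto
  ultimately show ?thesis
    by (simp only: scaleR_zero_left add_0_right)
qed

(* The integral of f(x + s e) over a large box does not depend on s; differentiating it at s = 0
   under the integral sign gives the claim. *)
lemma has_integral_derivative_compact_support: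
  fixes f :: "'a::euclidean_space \<Rightarrow> real"
  assumes f: "C1_on UNIV f f'" and K: "compact K" "\<And>x. x \<notin> K \<Longrightarrow> f x = 0"
  shows "((\<lambda>x. f' x e) has_integral 0) UNIV"
proof -
  obtain R where R: "\<And>x. x \<in> K \<Longrightarrow> norm x \<le> R"
    using compact_imp_bounded[OF K(1)] unfolding bounded_iff by auto
  obtain c :: 'a where c: "cball 0 (R + norm e) \<subseteq> cbox (-c) c"
    using bounded_subset_cbox_symmetric[OF bounded_cball] by blast
  define B where "B = cbox (-c) c"
  have shift_vanishes: "f (x + s *\<^sub>R e) = 0" if "x \<notin> B" "\<bar>s\<bar> < 1" for x s
  proof (rule K(2), rule notI)
    assume "x + s *\<^sub>R e \<in> K"
    then have "norm (x + s *\<^sub>R e) \<le> R"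
      by (rule R)
    moreover have "norm (s *\<^sub>R e) \<le> norm e"
      using that(2) by (simp add: mult_left_le_one_le)
    moreover have "norm x \<le> norm (x + s *\<^sub>R e) + norm (s *\<^sub>R e)"
      using norm_triangle_ineq4[of "x + s *\<^sub>R e" "s *\<^sub>R e"] by simp
    ultimately have "x \<in> cball 0 (R + norm e)"
      by simp
    then show False
      using that(1) c by (auto simp: B_def)
  qed
  obtain i where i: "(f has_integral i) B"
    unfolding B_def
    by (meson integrable_continuous C1_on_imp_continuous_on[OF f] continuous_on_subset subset_UNIV
        integrable_integral)
  have "integral B (\<lambda>x. f (x + s *\<^sub>R e)) = i" if "s \<in> ball 0 1" for s
  proof -
    have "((\<lambda>x. f (x + s *\<^sub>R e)) has_integral i) UNIV"
      by (rule has_integral_shift[OF i[unfolded B_def]]) (use shift_vanishes[of _ 0] in \<open>auto simp: B_def\<close>)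
    moreover have "(\<lambda>x. if x \<in> B then f (x + s *\<^sub>R e) else 0) = (\<lambda>x. f (x + s *\<^sub>R e))"
      using that shift_vanishes by auto
    ultimately show ?thesis
      using has_integral_restrict_UNIV[of B "\<lambda>x. f (x + s *\<^sub>R e)" i] by (simp add: integral_unique)
  qed
  then have "((\<lambda>s. integral B (\<lambda>x. f (x + s *\<^sub>R e))) has_real_derivative 0) (at 0)"
    by (intro has_field_derivative_transform_within_open[OF DERIV_const[of i] open_ball[of 0 1]]) auto
  then have "integral B (\<lambda>x. f' x e) = 0"
    using DERIV_unique has_real_derivative_integral_translate[OF f] unfolding B_def by blast
  moreover have "(\<lambda>x. f' x e) integrable_on B"
    unfolding B_def by (rule integrable_continuous)
      (rule continuous_on_subset[OF C1_on_continuous_derivative[OF f]], simp)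
  moreover have "f' x e = 0" if "x \<notin> B" for x
    by (rule has_derivative_eq_0_if_vanishing[OF C1_on_has_derivative[OF f UNIV_I], of "- B"])
       (use that shift_vanishes[of _ 0] in \<open>auto simp: B_def\<close>)
  ultimately show ?thesis
    by (metis has_integral_integral has_integral_on_superset subset_UNIV)
qed

lemma C1_on_component:
  "C1_on S G G' \<Longrightarrow> C1_on S (\<lambda>x. G x $ k) (\<lambda>x h. G' x h $ k)"
  by (auto simp: C1_on_def intro!: bounded_linear.has_derivative[OF bounded_linear_vec_nth]
      continuous_intros)

lemma has_integral_divergence_cutoff:
  fixes G :: "real^'d \<Rightarrow> real^'d" and \<psi> :: "real^'d \<Rightarrow> real"
  assumes \<psi>: "C1_on UNIV \<psi> \<psi>'" "\<And>x. x \<notin> \<Omega> \<Longrightarrow> \<psi> x = 0" "\<And>x h. x \<notin> \<Omega> \<Longrightarrow> \<psi>' x h = 0"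
    and \<Omega>: "bounded \<Omega>" and V: "open V" "closure \<Omega> \<subseteq> V" and G: "C1_on V G G'"
  shows "((\<lambda>x. \<psi> x * divergence G x + \<psi>' x (G x)) has_integral 0) \<Omega>"
proof -
  define f where "f k x = \<psi> x * G x $ k" for k x
  define f' where "f' k x h = (if x \<in> V then \<psi> x * G' x h $ k + \<psi>' x h * G x $ k else 0)" for k x h
  have f_out: "f k x = 0" "f' k x h = 0" if "x \<notin> \<Omega>" for k x h
    using that \<psi>(2,3) by (auto simp: f_def f'_def)
  then have f_out_closure: "f k x = 0" "f' k x h = 0" if "x \<notin> closure \<Omega>" for k x h
    using that closure_subset by blast+
  have "C1_on UNIV (f k) (f' k)" for k
  proof -
    have "C1_on V (f k) (f' k)"
      by (rule C1_on_transform_open[OF C1_on_mult[OF C1_on_subset[OF \<psi>(1)] C1_on_component[OF G]] V(1)])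
         (auto simp: f_def f'_def)
    moreover have "C1_on (- closure \<Omega>) (f k) (f' k)"
      by (rule C1_on_transform_open[OF C1_on_const[of _ 0]]) (simp_all add: f_out_closure open_Compl)
    moreover have "V \<union> - closure \<Omega> = UNIV"
      using V(2) by auto
    ultimately show ?thesis
      using C1_on_Un_open V(1) by fastforce
  qed
  then have "((\<lambda>x. f' k x (axis k 1)) has_integral 0) UNIV" for k
    by (rule has_integral_derivative_compact_support[OF _ compact_closure[THEN iffD2, OF \<Omega>]])
       (simp_all add: f_out_closure)
  then have "((\<lambda>x. \<Sum>k\<in>UNIV. f' k x (axis k 1)) has_integral 0) UNIV"
    using has_integral_sum[of UNIV "\<lambda>k x. f' k x (axis k 1)" "\<lambda>k. 0" UNIV] by simp
  moreover have "(\<Sum>k\<in>UNIV. f' k x (axis k 1))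
      = (if x \<in> \<Omega> then \<psi> x * divergence G x + \<psi>' x (G x) else 0)" for x
  proof (cases "x \<in> \<Omega>")
    case True
    then have "x \<in> V"
      using V(2) closure_subset by blast
    then have "(\<Sum>k\<in>UNIV. f' k x (axis k 1))
        = (\<Sum>k\<in>UNIV. \<psi> x * G' x (axis k 1) $ k + G x $ k * \<psi>' x (axis k 1))"
      by (simp add: f'_def mult.commute)
    also have "\<dots> = \<psi> x * divergence G x + \<psi>' x (G x)"
      by (simp only: sum.distrib sum_distrib_left[symmetric]
          divergence_eq_derivative[OF C1_on_has_derivative[OF G \<open>x \<in> V\<close>]]
          linear_eq_sum_axis[OF has_derivative_linear[OF C1_on_has_derivative[OF \<psi>(1) UNIV_I]], symmetric])
    finally show ?thesis
      using True by simp
  qed (simp add: f_out)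
  ultimately have "((\<lambda>x. if x \<in> \<Omega> then \<psi> x * divergence G x + \<psi>' x (G x) else 0) has_integral 0) UNIV"
    by simp
  then show ?thesis
    by (rule has_integral_restrict_UNIV[THEN iffD1])
qed

lemma has_real_derivative_glue:
  fixes f p q :: "real \<Rightarrow> real"
  assumes p: "(p has_real_derivative D) (at x)" and q: "(q has_real_derivative D) (at x)"
    and "d > 0" and left: "\<And>y. x - d < y \<Longrightarrow> y \<le> x \<Longrightarrow> f y = p y"
    and right: "\<And>y. x \<le> y \<Longrightarrow> y < x + d \<Longrightarrow> f y = q y"
  shows "(f has_real_derivative D) (at x)"
proof -
  have "((\<lambda>y. (p y - p x) / (y - x)) \<longlongrightarrow> D) (at_left x)"
    using p unfolding has_field_derivative_iff by (rule tendsto_mono[rotated]) (simp add: at_le)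
  moreover have "\<forall>\<^sub>F y in at_left x. (p y - p x) / (y - x) = (f y - f x) / (y - x)"
    by (rule eventually_at_leftI[of "x - d"]) (use \<open>d > 0\<close> left in auto)
  ultimately have "((\<lambda>y. (f y - f x) / (y - x)) \<longlongrightarrow> D) (at_left x)"
    by (rule Lim_transform_eventually)
  moreover have "((\<lambda>y. (q y - q x) / (y - x)) \<longlongrightarrow> D) (at_right x)"
    using q unfolding has_field_derivative_iff by (rule tendsto_mono[rotated]) (simp add: at_le)
  moreover have "\<forall>\<^sub>F y in at_right x. (q y - q x) / (y - x) = (f y - f x) / (y - x)"
    by (rule eventually_at_rightI[of _ "x + d"]) (use \<open>d > 0\<close> right in auto)
  then have "((\<lambda>y. (f y - f x) / (y - x)) \<longlongrightarrow> D) (at_right x)"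
    using calculation(2) by (rule Lim_transform_eventually[rotated])
  ultimately show ?thesis
    unfolding has_field_derivative_iff by (subst at_eq_sup_left_right) (rule filterlim_sup)
qed

definition cutoff_clamp :: "real \<Rightarrow> real"
  where "cutoff_clamp s = max (-1) (min 0 s)"

(* The cubic smoothstep: a C\<^sup>1 transition from 1 on (-\<infinity>, -1] to 0 on [0, \<infinity>). *)
definition cutoff :: "real \<Rightarrow> real"
  where "cutoff s = 1 - 3 * (cutoff_clamp s + 1)\<^sup>2 + 2 * (cutoff_clamp s + 1) ^ 3"

definition cutoff' :: "real \<Rightarrow> real"
  where "cutoff' s = 6 * (cutoff_clamp s + 1) * cutoff_clamp s"

lemma cutoff_eq_1: "s \<le> -1 \<Longrightarrow> cutoff s = 1"
  and cutoff'_eq_0_left: "s \<le> -1 \<Longrightarrow> cutoff' s = 0"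
  and cutoff_eq_0: "0 \<le> s \<Longrightarrow> cutoff s = 0"
  and cutoff'_eq_0_right: "0 \<le> s \<Longrightarrow> cutoff' s = 0"
  by (simp_all add: cutoff_def cutoff'_def cutoff_clamp_def)

lemma continuous_on_cutoff [continuous_intros]:
    "continuous_on S f \<Longrightarrow> continuous_on S (\<lambda>x. cutoff (f x))"
  and continuous_on_cutoff' [continuous_intros]:
    "continuous_on S f \<Longrightarrow> continuous_on S (\<lambda>x. cutoff' (f x))"
  unfolding cutoff_def cutoff'_def cutoff_clamp_def by (intro continuous_intros; assumption)+

lemma abs_cutoff_le: "\<bar>cutoff s\<bar> \<le> 1"
proof -
  define c where "c = cutoff_clamp s + 1"
  have c: "0 \<le> c" "c \<le> 1"
    by (auto simp: c_def cutoff_clamp_def)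
  have "cutoff s = (1 - c)\<^sup>2 * (1 + 2 * c)" "cutoff s = 1 - c\<^sup>2 * (3 - 2 * c)"
    by (simp_all add: cutoff_def c_def power2_eq_square power3_eq_cube algebra_simps)
  moreover have "0 \<le> (1 - c)\<^sup>2 * (1 + 2 * c)" "0 \<le> c\<^sup>2 * (3 - 2 * c)"
    using c by simp_all
  ultimately show ?thesis
    by linarith
qed

lemma abs_cutoff'_le: "\<bar>cutoff' s\<bar> \<le> 3/2"
proof -
  define c where "c = cutoff_clamp s"
  have "-1 \<le> c" "c \<le> 0"
    by (auto simp: c_def cutoff_clamp_def)
  then have "(c + 1) * c \<le> 0"
    by (simp add: mult_nonneg_nonpos)
  moreover have "cutoff' s = 6 * ((c + 1) * c)" "cutoff' s = 6 * (c + 1/2)\<^sup>2 - 3/2"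
    by (simp_all add: cutoff'_def c_def power2_eq_square algebra_simps)
  moreover have "0 \<le> (c + 1/2)\<^sup>2"
    by simp
  ultimately show ?thesis
    by linarith
qed

lemma has_real_derivative_cutoff: "(cutoff has_real_derivative cutoff' s) (at s)"
proof -
  define P where "P y = 1 - 3 * (y + 1)\<^sup>2 + 2 * (y + 1) ^ 3" for y :: real
  have P: "(P has_real_derivative 6 * (y + 1) * y) (at y)" for y
    unfolding P_def
    by (rule derivative_eq_intros refl | simp)+ (simp add: power2_eq_square algebra_simps)
  have cutoff_P: "cutoff y = P y" if "-1 \<le> y" "y \<le> 0" for y
    using that by (simp add: cutoff_def cutoff_clamp_def P_def)
  have cutoff'_P: "cutoff' y = 6 * (y + 1) * y" if "-1 \<le> y" "y \<le> 0" for y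
    using that by (simp add: cutoff'_def cutoff_clamp_def)
  consider "s < -1" | "s = -1" | "-1 < s" "s < 0" | "s = 0" | "0 < s"
    by linarith
  then show ?thesis
  proof cases
    case 1
    have "(cutoff has_real_derivative 0) (at s)"
      by (rule has_real_derivative_glue[OF DERIV_const[of 1] DERIV_const[of 1], where d = "-1 - s"])
         (use 1 in \<open>auto simp: cutoff_eq_1\<close>)
    then show ?thesis
      using 1 by (simp add: cutoff'_eq_0_left)
  next
    case 2
    have "(cutoff has_real_derivative 0) (at (-1))"
      by (rule has_real_derivative_glue[OF DERIV_const[of 1], where q = P and d = 1])
         (use P[of "-1"] in \<open>auto simp: cutoff_eq_1 cutoff_P P_def\<close>)
    then show ?thesis
      using 2 by (simp add: cutoff'_eq_0_left)
  next
    case 3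
    have "(cutoff has_real_derivative 6 * (s + 1) * s) (at s)"
      by (rule has_real_derivative_glue[OF P P, where d = "min (s + 1) (- s)"])
         (use 3 in \<open>auto simp: cutoff_P\<close>)
    then show ?thesis
      using 3 by (simp add: cutoff'_P)
  next
    case 4
    have "(cutoff has_real_derivative 0) (at 0)"
      by (rule has_real_derivative_glue[OF _ DERIV_const[of 0], where p = P and d = 1])
         (use P[of 0] in \<open>auto simp: cutoff_eq_0 cutoff_P P_def\<close>)
    then show ?thesis
      using 4 by (simp add: cutoff'_eq_0_right)
  next
    case 5
    have "(cutoff has_real_derivative 0) (at s)"
      by (rule has_real_derivative_glue[OF DERIV_const[of 0] DERIV_const[of 0], where d = s])
         (use 5 in \<open>auto simp: cutoff_eq_0\<close>)
    then show ?thesis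
      using 5 by (simp add: cutoff'_eq_0_right)
  qed
qed

definition boundary_layer :: "('a \<Rightarrow> real) \<Rightarrow> real \<Rightarrow> 'a set"
  where "boundary_layer \<phi> \<epsilon> = {x. -\<epsilon> < \<phi> x \<and> \<phi> x < 0}"

lemma open_boundary_layer:
  assumes "continuous_on UNIV \<phi>"
  shows "open (boundary_layer \<phi> \<epsilon>)"
proof -
  have "boundary_layer \<phi> \<epsilon> = \<phi> -` {-\<epsilon><..<0}"
    by (auto simp: boundary_layer_def)
  then show ?thesis
    using assms by (simp add: open_vimage)
qed

lemma measure_disjoint_translates_le:
  fixes A B :: "'a::euclidean_space set"
  assumes A: "A \<in> lmeasurable" and B: "B \<in> lmeasurable" and J: "finite J"
    and sub: "\<And>j. j \<in> J \<Longrightarrow> (+) (v j) ` A \<subseteq> B"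
    and disj: "pairwise (\<lambda>i j. disjnt ((+) (v i) ` A) ((+) (v j) ` A)) J"
  shows "real (card J) * measure lebesgue A \<le> measure lebesgue B"
proof -
  have meas: "(+) (v j) ` A \<in> lmeasurable" for j
    using A by (rule measurable_translation)
  have "real (card J) * measure lebesgue A = measure lebesgue (\<Union>j\<in>J. (+) (v j) ` A)"
    by (simp add: measure_UNION'[OF J meas disj] measure_translation)
  also have "\<dots> \<le> measure lebesgue B"
    using sub meas J B by (intro measure_mono_fmeasurable) (auto intro: fmeasurableD)
  finally show ?thesis .
qed

lemma boundary_layer_crossing_length:
  fixes \<phi> :: "'a::euclidean_space \<Rightarrow> real"
  assumes deriv: "\<And>x. (\<phi> has_derivative D\<phi> x) (at x)"
    and w: "norm w = 1" and pos: "\<And>y. y \<in> ball x0 (2 * r) \<Longrightarrow> D\<phi> y w \<ge> c"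
    and b: "b \<in> boundary_layer \<phi> \<epsilon> \<inter> ball x0 r" and a: "b + t *\<^sub>R w \<in> boundary_layer \<phi> \<epsilon>"
    and t: "0 < t" "t < r"
  shows "c * t < \<epsilon>"
proof -
  define q where "q s = \<phi> (b + s *\<^sub>R w)" for s
  have "(q has_real_derivative D\<phi> (b + s *\<^sub>R w) w) (at s)" for s
  proof -
    have "((\<lambda>s. b + s *\<^sub>R w) has_derivative (\<lambda>h. h *\<^sub>R w)) (at s)"
      by (auto intro!: derivative_eq_intros)
    from has_derivative_compose[OF this deriv]
    have "(q has_derivative (\<lambda>h. D\<phi> (b + s *\<^sub>R w) (h *\<^sub>R w))) (at s)"
      by (simp add: q_def[abs_def])
    moreover have "(\<lambda>h. D\<phi> (b + s *\<^sub>R w) (h *\<^sub>R w)) = (*) (D\<phi> (b + s *\<^sub>R w) w)"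
      by (rule ext) (simp add: linear_scale[OF has_derivative_linear[OF deriv]])
    ultimately show ?thesis
      by (simp add: has_field_derivative_def)
  qed
  then obtain z where z: "0 < z" "z < t" "q t - q 0 = (t - 0) * D\<phi> (b + z *\<^sub>R w) w"
    using MVT2[of 0 t q "\<lambda>s. D\<phi> (b + s *\<^sub>R w) w"] t by auto
  have "dist x0 (b + z *\<^sub>R w) \<le> dist x0 b + norm (z *\<^sub>R w)"
    by (metis dist_norm dist_triangle2 norm_minus_commute add_diff_cancel_left')
  moreover have "norm (z *\<^sub>R w) = z" "dist x0 b < r"
    using w z b by auto
  ultimately have "b + z *\<^sub>R w \<in> ball x0 (2 * r)"
    using z t by simp
  then have "c * t \<le> t * D\<phi> (b + z *\<^sub>R w) w"
    using mult_right_mono[OF pos, of _ t] t by (simp add: mult.commute)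
  also have "\<dots> = \<phi> (b + t *\<^sub>R w) - \<phi> b"
    using z by (simp add: q_def)
  also have "\<dots> < \<epsilon>"
    using a b by (auto simp: boundary_layer_def)
  finally show ?thesis .
qed

lemma disjnt_boundary_layer_translates:
  fixes \<phi> :: "'a::euclidean_space \<Rightarrow> real"
  assumes deriv: "\<And>x. (\<phi> has_derivative D\<phi> x) (at x)"
    and w: "norm w = 1" and pos: "\<And>y. y \<in> ball x0 (2 * r) \<Longrightarrow> D\<phi> y w \<ge> c"
    and st: "s < t" "t - s < r" "\<epsilon> \<le> c * (t - s)"
  shows "disjnt ((+) (s *\<^sub>R w) ` (boundary_layer \<phi> \<epsilon> \<inter> ball x0 r))
    ((+) (t *\<^sub>R w) ` (boundary_layer \<phi> \<epsilon> \<inter> ball x0 r))"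
proof (rule ccontr)
  assume "\<not> ?thesis"
  then obtain a b where ab: "a \<in> boundary_layer \<phi> \<epsilon> \<inter> ball x0 r" "b \<in> boundary_layer \<phi> \<epsilon> \<inter> ball x0 r"
    "s *\<^sub>R w + a = t *\<^sub>R w + b"
    unfolding disjnt_def by blast
  have a_eq: "a = b + (t - s) *\<^sub>R w"
    using ab(3) by (simp add: algebra_simps)
  have "b + (t - s) *\<^sub>R w \<in> boundary_layer \<phi> \<epsilon>"
    using ab(1) unfolding a_eq by simp
  then have "c * (t - s) < \<epsilon>"
    using ab(2) st by (intro boundary_layer_crossing_length[OF deriv w pos]) auto
  then show False
    using st(3) by simp
qed

(* Along w the function \<phi> grows at rate at least c, so translating by multiples of h moves the
   layer of width c h off itself; N such translates fit disjointly into the ball of radius 2r. *)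
lemma measure_boundary_layer_ball_packing:
  fixes \<phi> :: "'a::euclidean_space \<Rightarrow> real"
  assumes deriv: "\<And>x. (\<phi> has_derivative D\<phi> x) (at x)"
    and w: "norm w = 1" and c: "c > 0" and pos: "\<And>y. y \<in> ball x0 (2 * r) \<Longrightarrow> D\<phi> y w \<ge> c"
    and h: "h > 0" "\<epsilon> \<le> c * h" and N: "real N * h \<le> r"
  shows "real N * measure lebesgue (boundary_layer \<phi> \<epsilon> \<inter> ball x0 r) \<le> measure lebesgue (ball x0 (2 * r))"
proof -
  define A where "A = boundary_layer \<phi> \<epsilon> \<inter> ball x0 r"
  have "continuous_on UNIV \<phi>"
    using deriv by (meson continuous_at_imp_continuous_on has_derivative_continuous)
  then have A: "A \<in> lmeasurable"
    unfolding A_def by (intro lmeasurable_open open_Int open_boundary_layer) auto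
  have "real (card {..<N}) * measure lebesgue A \<le> measure lebesgue (ball x0 (2 * r))"
  proof (rule measure_disjoint_translates_le[OF A _ _ _, where v = "\<lambda>j. (real j * h) *\<^sub>R w"])
    show "(+) ((real j * h) *\<^sub>R w) ` A \<subseteq> ball x0 (2 * r)" if "j \<in> {..<N}" for j
    proof
      fix y assume "y \<in> (+) ((real j * h) *\<^sub>R w) ` A"
      then obtain a where a: "a \<in> A" "y = (real j * h) *\<^sub>R w + a"
        by auto
      have "real j * h < real N * h"
        using that h(1) by simp
      then have "real j * h < r"
        using N by linarith
      moreover have "dist x0 y \<le> dist x0 a + norm ((real j * h) *\<^sub>R w)"
        using a(2) by (metis add.commute dist_norm dist_triangle2 norm_minus_commute add_diff_cancel_right')
      ultimately show "y \<in> ball x0 (2 * r)"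
        using a(1) w h by (auto simp: A_def)
    qed
    have disjoint: "disjnt ((+) ((real i * h) *\<^sub>R w) ` A) ((+) ((real j * h) *\<^sub>R w) ` A)"
      if "i < j" "j < N" for i j
    proof -
      have "1 \<le> real j - real i" "real j - real i < real N"
        using that by auto
      then have d: "h \<le> (real j - real i) * h" "(real j - real i) * h < real N * h"
        using h by (auto intro: mult_strict_right_mono)
      have eq: "real j * h - real i * h = (real j - real i) * h"
        by (simp add: left_diff_distrib)
      have "c * h \<le> c * ((real j - real i) * h)"
        using mult_left_mono[OF d(1), of c] c by simp
      then have "\<epsilon> \<le> c * (real j * h - real i * h)"
        unfolding eq using h by linarith
      moreover have "real i * h < real j * h" "real j * h - real i * h < r"
        using d eq h N by linarith+
      ultimately show ?thesis
        using deriv w pos unfolding A_def by (intro disjnt_boundary_layer_translates)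
    qed
    show "pairwise (\<lambda>i j. disjnt ((+) ((real i * h) *\<^sub>R w) ` A) ((+) ((real j * h) *\<^sub>R w) ` A)) {..<N}"
      unfolding pairwise_def by (metis disjoint disjnt_sym lessThan_iff linorder_neqE_nat)
  qed auto
  then show ?thesis
    by (simp add: A_def)
qed

lemma measure_boundary_layer_ball_le:
  fixes \<phi> :: "'a::euclidean_space \<Rightarrow> real"
  assumes deriv: "\<And>x. (\<phi> has_derivative D\<phi> x) (at x)"
    and w: "norm w = 1" and c: "c > 0" and r: "r > 0"
    and pos: "\<And>y. y \<in> ball x0 (2 * r) \<Longrightarrow> D\<phi> y w \<ge> c"
    and \<epsilon>: "0 < \<epsilon>" "\<epsilon> \<le> r * c / 2"
  shows "measure lebesgue (boundary_layer \<phi> \<epsilon> \<inter> ball x0 r)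
    \<le> 2 * measure lebesgue (ball x0 (2 * r)) / (r * c) * \<epsilon>"
proof -
  define h where "h = \<epsilon> / c"
  define N where "N = nat \<lfloor>r / h\<rfloor>"
  have h: "h > 0" "r / h \<ge> 2" "\<epsilon> \<le> c * h"
    using \<epsilon> c r by (simp_all add: h_def field_simps)
  have "real N = of_int \<lfloor>r / h\<rfloor>"
    using h by (simp add: N_def)
  then have "r / h - 1 < real N" "real N \<le> r / h"
    by linarith+
  then have N: "r / (2 * h) \<le> real N" "real N * h \<le> r"
    using h by (simp_all add: pos_le_divide_eq) (simp add: field_simps)
  have "1 \<le> r / (2 * h)"
    using h by (simp add: field_simps)
  with N(1) have N_pos: "real N > 0"
    by linarith
  have "measure lebesgue (boundary_layer \<phi> \<epsilon> \<inter> ball x0 r) \<le> measure lebesgue (ball x0 (2 * r)) / real N"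
    using measure_boundary_layer_ball_packing[OF deriv w c pos h(1,3) N(2)] N_pos
    by (simp add: pos_le_divide_eq mult.commute)
  also have "\<dots> \<le> measure lebesgue (ball x0 (2 * r)) / (r / (2 * h))"
    using N h r by (intro divide_left_mono) auto
  also have "\<dots> = 2 * measure lebesgue (ball x0 (2 * r)) / (r * c) * \<epsilon>"
    using c r by (simp add: h_def field_simps)
  finally show ?thesis .
qed

lemma boundary_layer_subset_open:
  fixes \<phi> :: "'a::euclidean_space \<Rightarrow> real"
  assumes \<Omega>: "\<Omega> = {x. \<phi> x < 0}" "bounded \<Omega>" and \<phi>: "continuous_on UNIV \<phi>"
    and W: "open W" "frontier \<Omega> \<subseteq> W"
  obtains \<epsilon> where "\<epsilon> > 0" "boundary_layer \<phi> \<epsilon> \<subseteq> W"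
proof -
  define C where "C = closure \<Omega> - W"
  have "compact C"
    unfolding C_def using \<Omega>(2) W(1) by (intro compact_diff) (auto simp: compact_closure)
  show ?thesis
  proof (cases "C = {}")
    case True
    then show ?thesis
      using closure_subset[of \<Omega>] that[of 1] \<Omega>(1) by (auto simp: C_def boundary_layer_def)
  next
    case False
    then obtain x1 where x1: "x1 \<in> C" "\<And>y. y \<in> C \<Longrightarrow> \<phi> y \<le> \<phi> x1"
      using continuous_attains_sup[OF \<open>compact C\<close> False continuous_on_subset[OF \<phi>]] by auto
    have "open \<Omega>"
      using \<phi> unfolding \<Omega>(1) by (simp add: open_Collect_less continuous_on_const)
    then have "x1 \<in> \<Omega>"
      using x1(1) W(2) by (auto simp: C_def frontier_def interior_open)
    then have "\<phi> x1 < 0"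
      using \<Omega>(1) by simp
    moreover have "boundary_layer \<phi> (- \<phi> x1) \<subseteq> W"
    proof
      fix x assume x: "x \<in> boundary_layer \<phi> (- \<phi> x1)"
      show "x \<in> W"
      proof (rule ccontr)
        assume "x \<notin> W"
        moreover have "x \<in> \<Omega>"
          using x \<Omega>(1) by (simp add: boundary_layer_def)
        ultimately have "x \<in> C"
          using closure_subset[of \<Omega>] by (auto simp: C_def)
        then show False
          using x1(2)[of x] x by (simp add: boundary_layer_def)
      qed
    qed
    ultimately show ?thesis
      using that[of "- \<phi> x1"] by simp
  qed
qed

lemma transversal_direction:
  fixes \<phi> :: "'a::euclidean_space \<Rightarrow> real"
  assumes \<phi>: "C1_on UNIV \<phi> D\<phi>" and nondeg: "D\<phi> x \<noteq> (\<lambda>_. 0)"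
  obtains r c w where "r > 0" "c > 0" "norm w = 1" "\<And>y. y \<in> ball x (2 * r) \<Longrightarrow> D\<phi> y w \<ge> c"
proof -
  have lin: "linear (D\<phi> x)"
    using has_derivative_linear[OF C1_on_has_derivative[OF \<phi> UNIV_I]] .
  obtain v where v: "D\<phi> x v \<noteq> 0"
    using nondeg by blast
  then have "v \<noteq> 0"
    using linear_0[OF lin] by auto
  define w where "w = (sgn (D\<phi> x v) / norm v) *\<^sub>R v"
  have w: "norm w = 1"
    using v \<open>v \<noteq> 0\<close> by (simp add: w_def abs_sgn_eq)
  have "D\<phi> x w = \<bar>D\<phi> x v\<bar> / norm v"
    by (simp add: w_def linear_scale[OF lin] abs_sgn mult.commute)
  then have Dw: "D\<phi> x w > 0"
    using v \<open>v \<noteq> 0\<close> by simp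
  have "isCont (\<lambda>y. D\<phi> y w) x"
    using C1_on_continuous_derivative[OF \<phi>, of w] by (simp add: continuous_on_eq_continuous_at)
  then obtain \<rho> where \<rho>: "\<rho> > 0" "\<And>y. dist y x < \<rho> \<Longrightarrow> dist (D\<phi> y w) (D\<phi> x w) < D\<phi> x w / 2"
    unfolding continuous_at_eps_delta using Dw half_gt_zero by blast
  show ?thesis
  proof (rule that[of "\<rho> / 2" "D\<phi> x w / 2" w])
    show "D\<phi> x w / 2 \<le> D\<phi> y w" if "y \<in> ball x (2 * (\<rho> / 2))" for y
    proof -
      have "dist y x < \<rho>"
        using that by (simp add: dist_commute)
      then have "\<bar>D\<phi> y w - D\<phi> x w\<bar> < D\<phi> x w / 2"
        using \<rho>(2) by (simp add: dist_real_def)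
      then show ?thesis
        using abs_ge_minus_self[of "D\<phi> y w - D\<phi> x w"] by linarith
    qed
  qed (use \<rho>(1) Dw w in auto)
qed

lemma measure_boundary_layer_le:
  fixes \<phi> :: "'a::euclidean_space \<Rightarrow> real"
  assumes \<Omega>: "\<Omega> = {x. \<phi> x < 0}" "bounded \<Omega>" and \<phi>: "C1_on UNIV \<phi> D\<phi>"
    and nondeg: "\<And>x. x \<in> frontier \<Omega> \<Longrightarrow> D\<phi> x \<noteq> (\<lambda>_. 0)"
  obtains C \<epsilon>0 where "\<epsilon>0 > 0"
    "\<And>\<epsilon>. 0 < \<epsilon> \<Longrightarrow> \<epsilon> \<le> \<epsilon>0 \<Longrightarrow> measure lebesgue (boundary_layer \<phi> \<epsilon>) \<le> C * \<epsilon>"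
proof -
  have deriv: "(\<phi> has_derivative D\<phi> x) (at x)" for x
    using C1_on_has_derivative[OF \<phi> UNIV_I] .
  have "\<exists>r c w. r > 0 \<and> c > 0 \<and> norm w = 1 \<and> (\<forall>y\<in>ball x (2 * r). D\<phi> y w \<ge> c)"
    if "x \<in> frontier \<Omega>" for x
    by (rule transversal_direction[OF \<phi> nondeg[OF that]]) blast
  then obtain R c w where Rcw: "\<And>x. x \<in> frontier \<Omega> \<Longrightarrow>
      R x > 0 \<and> c x > 0 \<and> norm (w x) = 1 \<and> (\<forall>y\<in>ball x (2 * R x). D\<phi> y (w x) \<ge> c x)"
    by metis
  obtain F where F: "F \<subseteq> frontier \<Omega>" "finite F" "frontier \<Omega> \<subseteq> (\<Union>x\<in>F. ball x (R x))"
    using compact_frontier_bounded[OF \<Omega>(2)]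
    by (rule compactE_image[where f = "\<lambda>x. ball x (R x)"]) (use Rcw in auto)
  obtain \<epsilon>1 where \<epsilon>1: "\<epsilon>1 > 0" "boundary_layer \<phi> \<epsilon>1 \<subseteq> (\<Union>x\<in>F. ball x (R x))"
    using boundary_layer_subset_open[OF \<Omega> C1_on_imp_continuous_on[OF \<phi>] _ F(3)] by blast
  define \<epsilon>0 where "\<epsilon>0 = Min (insert \<epsilon>1 ((\<lambda>x. R x * c x / 2) ` F))"
  have \<epsilon>0: "\<epsilon>0 > 0" "\<epsilon>0 \<le> \<epsilon>1"
    using \<epsilon>1 F Rcw by (auto simp: \<epsilon>0_def Min_gr_iff)
  have \<epsilon>0_le: "\<epsilon>0 \<le> R x * c x / 2" if "x \<in> F" for x
    unfolding \<epsilon>0_def using that F(2) by (intro Min_le) auto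
  define C where "C = (\<Sum>x\<in>F. 2 * measure lebesgue (ball x (2 * R x)) / (R x * c x))"
  show ?thesis
  proof (rule that[OF \<epsilon>0(1)])
    fix \<epsilon> assume \<epsilon>: "0 < \<epsilon>" "\<epsilon> \<le> \<epsilon>0"
    have layer_open: "open (boundary_layer \<phi> \<epsilon>)"
      by (rule open_boundary_layer[OF C1_on_imp_continuous_on[OF \<phi>]])
    have "boundary_layer \<phi> \<epsilon> \<subseteq> boundary_layer \<phi> \<epsilon>1"
      using \<epsilon> \<epsilon>0(2) by (auto simp: boundary_layer_def)
    then have "boundary_layer \<phi> \<epsilon> \<subseteq> (\<Union>x\<in>F. boundary_layer \<phi> \<epsilon> \<inter> ball x (R x))"
      using \<epsilon>1(2) by blast
    then have "measure lebesgue (boundary_layer \<phi> \<epsilon>)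
        \<le> measure lebesgue (\<Union>x\<in>F. boundary_layer \<phi> \<epsilon> \<inter> ball x (R x))"
      using layer_open F(2)
      by (intro measure_mono_fmeasurable) (auto intro!: lmeasurable_open fmeasurable.finite_UN)
    also have "\<dots> \<le> (\<Sum>x\<in>F. measure lebesgue (boundary_layer \<phi> \<epsilon> \<inter> ball x (R x)))"
      using layer_open by (intro measure_UNION_le[OF F(2)]) auto
    also have "\<dots> \<le> (\<Sum>x\<in>F. 2 * measure lebesgue (ball x (2 * R x)) / (R x * c x) * \<epsilon>)"
    proof (rule sum_mono)
      fix x assume "x \<in> F"
      then show "measure lebesgue (boundary_layer \<phi> \<epsilon> \<inter> ball x (R x))
          \<le> 2 * measure lebesgue (ball x (2 * R x)) / (R x * c x) * \<epsilon>"
        using Rcw[of x] F(1) \<epsilon> \<epsilon>0_le[of x]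
        by (intro measure_boundary_layer_ball_le[OF deriv]) auto
    qed
    also have "\<dots> = C * \<epsilon>"
      by (simp add: C_def sum_distrib_right)
    finally show "measure lebesgue (boundary_layer \<phi> \<epsilon>) \<le> C * \<epsilon>" .
  qed
qed

lemma tendsto_integral_cutoff:
  fixes \<phi> f :: "'a::euclidean_space \<Rightarrow> real"
  assumes \<Omega>: "\<Omega> = {x. \<phi> x < 0}" "bounded \<Omega>" and \<phi>: "continuous_on UNIV \<phi>"
    and f: "continuous_on (closure \<Omega>) f" and s: "filterlim s at_top sequentially"
  shows "(\<lambda>m. integral \<Omega> (\<lambda>x. cutoff (s m * \<phi> x) * f x)) \<longlonglongrightarrow> integral \<Omega> f"
proof -
  have \<Omega>_leb: "\<Omega> \<in> sets lebesgue"
    using \<phi> unfolding \<Omega>(1) by (simp add: open_Collect_less continuous_on_const)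
  have ccl: "compact (closure \<Omega>)"
    using \<Omega>(2) by (simp add: compact_closure)
  show ?thesis
  proof (rule dominated_convergence(2))
    show "(\<lambda>x. cutoff (s m * \<phi> x) * f x) integrable_on \<Omega>" for m
      by (rule integrable_continuous_on_compact_superset[OF _ ccl closure_subset \<Omega>_leb])
         (intro continuous_intros continuous_on_subset[OF \<phi>] f subset_UNIV)
    show "(\<lambda>x. \<bar>f x\<bar>) integrable_on \<Omega>"
      by (rule integrable_continuous_on_compact_superset[OF _ ccl closure_subset \<Omega>_leb])
         (intro continuous_intros f)
    show "norm (cutoff (s m * \<phi> x) * f x) \<le> \<bar>f x\<bar>" for m x
      using abs_cutoff_le[of "s m * \<phi> x"] by (simp add: abs_mult mult_left_le_one_le)
    show "(\<lambda>m. cutoff (s m * \<phi> x) * f x) \<longlonglongrightarrow> f x" if "x \<in> \<Omega>" for x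
    proof -
      have "\<phi> x < 0"
        using that \<Omega>(1) by simp
      have "\<forall>\<^sub>F m in sequentially. s m \<ge> -1 / \<phi> x"
        using s by (simp add: filterlim_at_top)
      then have "\<forall>\<^sub>F m in sequentially. f x = cutoff (s m * \<phi> x) * f x"
      proof eventually_elim
        case (elim m)
        then have "s m * \<phi> x \<le> -1"
          using mult_right_mono_neg[OF elim, of "\<phi> x"] \<open>\<phi> x < 0\<close> by simp
        then show ?case
          by (simp add: cutoff_eq_1)
      qed
      then show ?thesis
        by (rule Lim_transform_eventually[OF tendsto_const])
    qed
  qed
qed

lemma norm_integral_cutoff'_le:
  fixes \<phi> g :: "'a::euclidean_space \<Rightarrow> real"
  assumes \<Omega>: "\<Omega> = {x. \<phi> x < 0}" "bounded \<Omega>" and \<phi>: "continuous_on UNIV \<phi>"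
    and g: "continuous_on (closure \<Omega>) g" "\<And>x. x \<in> boundary_layer \<phi> (1 / s) \<Longrightarrow> \<bar>g x\<bar> \<le> \<eta>"
    and layer: "measure lebesgue (boundary_layer \<phi> (1 / s)) \<le> C * (1 / s)"
    and s: "s > 0" and \<eta>: "\<eta> \<ge> 0"
  shows "norm (integral \<Omega> (\<lambda>x. cutoff' (s * \<phi> x) * s * g x)) \<le> 3/2 * \<eta> * C"
proof -
  define L where "L = boundary_layer \<phi> (1 / s)"
  have \<Omega>_leb: "\<Omega> \<in> sets lebesgue"
    using \<phi> unfolding \<Omega>(1) by (simp add: open_Collect_less continuous_on_const)
  have L: "L \<subseteq> \<Omega>" "L \<in> lmeasurable"
    using \<Omega> open_boundary_layer[OF \<phi>]
    by (auto simp: L_def boundary_layer_def intro!: lmeasurable_open intro: bounded_subset)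
  have bound: "norm (cutoff' (s * \<phi> x) * s * g x) \<le> (if x \<in> L then 3/2 * s * \<eta> else 0)"
    if "x \<in> \<Omega>" for x
  proof (cases "x \<in> L")
    case True
    then show ?thesis
      using g(2) abs_cutoff'_le[of "s * \<phi> x"] s \<eta>
      by (simp add: L_def abs_mult mult_mono' mult.commute mult.left_commute)
  next
    case False
    then have "s * \<phi> x \<le> -1"
      using that \<Omega>(1) s by (auto simp: L_def boundary_layer_def field_simps)
    then show ?thesis
      using False by (simp add: cutoff'_eq_0_left)
  qed
  have "norm (integral \<Omega> (\<lambda>x. cutoff' (s * \<phi> x) * s * g x))
      \<le> integral \<Omega> (\<lambda>x. if x \<in> L then 3/2 * s * \<eta> else 0)"
  proof (rule integral_norm_bound_integral[OF _ _ bound])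
    show "(\<lambda>x. cutoff' (s * \<phi> x) * s * g x) integrable_on \<Omega>"
      using \<Omega>(2) \<Omega>_leb
      by (intro integrable_continuous_on_compact_superset[OF _ _ closure_subset] continuous_intros
          continuous_on_subset[OF \<phi> subset_UNIV] g(1))
         (simp_all add: compact_closure)
    show "(\<lambda>x. if x \<in> L then 3/2 * s * \<eta> else 0) integrable_on \<Omega>"
      using L integrable_on_const[OF L(2)] by (simp add: integrable_restrict_Int Int_absorb2)
  qed
  also have "\<dots> = 3/2 * s * \<eta> * measure lebesgue L"
    using L lmeasure_integral[OF L(2)]
    by (simp add: integral_restrict_Int Int_absorb2 integral_mult_right[symmetric] del: integral_mult_right)
  also have "\<dots> \<le> 3/2 * s * \<eta> * (C * (1 / s))"
    using layer s \<eta> by (intro mult_left_mono) (simp_all add: L_def)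
  also have "\<dots> = 3/2 * \<eta> * C"
    using s by simp
  finally show ?thesis .
qed

lemma tendsto_integral_cutoff'_zero:
  fixes \<phi> g :: "'a::euclidean_space \<Rightarrow> real"
  assumes \<Omega>: "\<Omega> = {x. \<phi> x < 0}" "bounded \<Omega>" and \<phi>: "continuous_on UNIV \<phi>"
    and layer: "\<epsilon>0 > 0" "\<And>\<epsilon>. 0 < \<epsilon> \<Longrightarrow> \<epsilon> \<le> \<epsilon>0 \<Longrightarrow> measure lebesgue (boundary_layer \<phi> \<epsilon>) \<le> C * \<epsilon>"
    and g: "open V" "closure \<Omega> \<subseteq> V" "continuous_on V g" "\<And>x. x \<in> frontier \<Omega> \<Longrightarrow> g x = 0"
    and s: "filterlim s at_top sequentially"
  shows "(\<lambda>m. integral \<Omega> (\<lambda>x. cutoff' (s m * \<phi> x) * s m * g x)) \<longlonglongrightarrow> 0"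
proof (rule tendstoI)
  fix \<delta> :: real assume "\<delta> > 0"
  define \<eta> where "\<eta> = \<delta> / (2 * (\<bar>C\<bar> + 1))"
  have C: "\<bar>C\<bar> + 1 > 0"
    using abs_ge_zero[of C] by linarith
  then have "\<eta> > 0"
    using \<open>\<delta> > 0\<close> by (simp add: \<eta>_def)
  have "3/2 * \<eta> * C \<le> 3/2 * \<eta> * (\<bar>C\<bar> + 1)"
    using \<open>\<eta> > 0\<close> by (intro mult_left_mono) auto
  also have "\<dots> = 3/4 * \<delta>"
    using C by (simp add: \<eta>_def field_simps)
  also have "\<dots> < \<delta>"
    using \<open>\<delta> > 0\<close> by simp
  finally have \<eta>_small: "3/2 * \<eta> * C < \<delta>" .
  define W where "W = V \<inter> g -` {-\<eta><..<\<eta>}"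
  have "open W"
    unfolding W_def by (rule continuous_open_preimage[OF g(3) g(1)]) simp
  moreover have "frontier \<Omega> \<subseteq> W"
    using g(2,4) \<open>\<eta> > 0\<close> closure_Un_frontier by (fastforce simp: W_def)
  ultimately obtain \<epsilon>1 where \<epsilon>1: "\<epsilon>1 > 0" "boundary_layer \<phi> \<epsilon>1 \<subseteq> W"
    using boundary_layer_subset_open[OF \<Omega> \<phi>] by blast
  have "\<forall>\<^sub>F m in sequentially. s m \<ge> 1 / min \<epsilon>0 \<epsilon>1"
    using s by (simp add: filterlim_at_top)
  then show "\<forall>\<^sub>F m in sequentially. dist (integral \<Omega> (\<lambda>x. cutoff' (s m * \<phi> x) * s m * g x)) 0 < \<delta>"
  proof eventually_elim
    case (elim m)
    have e: "min \<epsilon>0 \<epsilon>1 > 0"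
      using \<epsilon>1(1) layer(1) by simp
    then have "s m > 0"
      using elim by (meson less_le_trans zero_less_divide_1_iff)
    moreover have "inverse (s m) \<le> inverse (1 / min \<epsilon>0 \<epsilon>1)"
      by (rule le_imp_inverse_le[OF elim]) (use e in simp)
    ultimately have sm: "s m > 0" "1 / s m \<le> \<epsilon>0" "1 / s m \<le> \<epsilon>1"
      by (simp_all add: inverse_eq_divide)
    have "\<bar>g x\<bar> \<le> \<eta>" if "x \<in> boundary_layer \<phi> (1 / s m)" for x
      using that \<epsilon>1(2) sm(3) by (force simp: W_def boundary_layer_def)
    then have "norm (integral \<Omega> (\<lambda>x. cutoff' (s m * \<phi> x) * s m * g x)) \<le> 3/2 * \<eta> * C"
      using layer(2)[OF _ sm(2)] sm(1) \<open>\<eta> > 0\<close>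
      by (intro norm_integral_cutoff'_le[OF \<Omega> \<phi> continuous_on_subset[OF g(3,2)]]) auto
    then show ?case
      using \<eta>_small by simp
  qed
qed

lemma continuous_on_divergence:
  fixes G :: "real^'d \<Rightarrow> real^'d"
  assumes "C1_on V G G'"
  shows "continuous_on V (divergence G)"
  by (rule continuous_on_eq[of _ "\<lambda>x. \<Sum>k\<in>UNIV. G' x (axis k 1) $ k"])
     (auto intro!: continuous_intros C1_on_continuous_derivative[OF assms]
       simp: divergence_eq_derivative[OF C1_on_has_derivative[OF assms]])

lemma continuous_on_derivative_apply:
  fixes \<phi> :: "real^'d \<Rightarrow> real"
  assumes "C1_on UNIV \<phi> D\<phi>" "continuous_on V G"
  shows "continuous_on V (\<lambda>x. D\<phi> x (G x))"
proof -
  have "D\<phi> x (G x) = (\<Sum>k\<in>UNIV. G x $ k * D\<phi> x (axis k 1))" for x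
    by (rule linear_eq_sum_axis[OF has_derivative_linear[OF C1_on_has_derivative[OF assms(1) UNIV_I]]])
  then show ?thesis
    by (simp add: continuous_intros assms(2) continuous_on_subset[OF C1_on_continuous_derivative[OF assms(1)]])
qed

lemma integral_cutoff_divergence_eq:
  fixes \<phi> :: "real^'d \<Rightarrow> real" and G :: "real^'d \<Rightarrow> real^'d"
  assumes \<Omega>: "\<Omega> = {x. \<phi> x < 0}" "bounded \<Omega>" and \<phi>: "C1_on UNIV \<phi> D\<phi>"
    and V: "open V" "closure \<Omega> \<subseteq> V" and G: "C1_on V G G'" and s: "s \<ge> 0"
  shows "integral \<Omega> (\<lambda>x. cutoff (s * \<phi> x) * divergence G x)
    = - integral \<Omega> (\<lambda>x. cutoff' (s * \<phi> x) * s * D\<phi> x (G x))"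
proof -
  have \<phi>_cont: "continuous_on UNIV \<phi>"
    by (rule C1_on_imp_continuous_on[OF \<phi>])
  have \<Omega>_leb: "\<Omega> \<in> sets lebesgue"
    using \<phi>_cont unfolding \<Omega>(1) by (simp add: open_Collect_less continuous_on_const)
  have ccl: "compact (closure \<Omega>)"
    using \<Omega>(2) by (simp add: compact_closure)
  have "C1_on UNIV (\<lambda>x. cutoff (s * \<phi> x)) (\<lambda>x h. cutoff' (s * \<phi> x) * (s * D\<phi> x h))"
    by (rule C1_on_compose_real[OF has_real_derivative_cutoff _ C1_on_cmult[OF \<phi>]])
       (intro continuous_intros)
  then have "((\<lambda>x. cutoff (s * \<phi> x) * divergence G x
      + cutoff' (s * \<phi> x) * (s * D\<phi> x (G x))) has_integral 0) \<Omega>"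
    by (rule has_integral_divergence_cutoff[OF _ _ _ \<Omega>(2) V G])
       (use s in \<open>auto simp: \<Omega>(1) cutoff_eq_0 cutoff'_eq_0_right\<close>)
  moreover have "(\<lambda>x. cutoff (s * \<phi> x) * divergence G x) integrable_on \<Omega>"
    by (rule integrable_continuous_on_compact_superset[OF _ ccl closure_subset \<Omega>_leb])
       (intro continuous_intros continuous_on_subset[OF \<phi>_cont subset_UNIV]
         continuous_on_subset[OF continuous_on_divergence[OF G] V(2)])
  moreover have "(\<lambda>x. cutoff' (s * \<phi> x) * s * D\<phi> x (G x)) integrable_on \<Omega>"
    by (rule integrable_continuous_on_compact_superset[OF _ ccl closure_subset \<Omega>_leb])
       (intro continuous_intros continuous_on_subset[OF \<phi>_cont subset_UNIV] continuous_on_subset[OF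
         continuous_on_derivative_apply[OF \<phi> C1_on_imp_continuous_on[OF G]] V(2)])
  ultimately show ?thesis
    by (simp add: integral_add[symmetric] integral_unique eq_neg_iff_add_eq_0 mult.assoc)
qed

lemma has_integral_divergence_tangential:
  fixes \<phi> :: "real^'d \<Rightarrow> real" and G :: "real^'d \<Rightarrow> real^'d"
  assumes \<Omega>: "\<Omega> = {x. \<phi> x < 0}" "bounded \<Omega>" and \<phi>: "C1_on UNIV \<phi> D\<phi>"
    and nondeg: "\<And>x. x \<in> frontier \<Omega> \<Longrightarrow> D\<phi> x \<noteq> (\<lambda>_. 0)"
    and V: "open V" "closure \<Omega> \<subseteq> V" and G: "C1_on V G G'"
    and tangential: "\<And>x. x \<in> frontier \<Omega> \<Longrightarrow> D\<phi> x (G x) = 0"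
  shows "(divergence G has_integral 0) \<Omega>"
proof -
  have \<phi>_cont: "continuous_on UNIV \<phi>"
    by (rule C1_on_imp_continuous_on[OF \<phi>])
  have div_cont: "continuous_on (closure \<Omega>) (divergence G)"
    using continuous_on_divergence[OF G] V(2) by (rule continuous_on_subset)
  obtain C \<epsilon>0 where layer: "\<epsilon>0 > 0"
      "\<And>\<epsilon>. 0 < \<epsilon> \<Longrightarrow> \<epsilon> \<le> \<epsilon>0 \<Longrightarrow> measure lebesgue (boundary_layer \<phi> \<epsilon>) \<le> C * \<epsilon>"
    using measure_boundary_layer_le[OF \<Omega> \<phi> nondeg] by blast
  define A where "A m = integral \<Omega> (\<lambda>x. cutoff (real m * \<phi> x) * divergence G x)" for m
  define B where "B m = integral \<Omega> (\<lambda>x. cutoff' (real m * \<phi> x) * real m * D\<phi> x (G x))" for m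
  have A_lim: "A \<longlonglongrightarrow> integral \<Omega> (divergence G)"
    unfolding A_def by (rule tendsto_integral_cutoff[OF \<Omega> \<phi>_cont div_cont filterlim_real_sequentially])
  have B_lim: "B \<longlonglongrightarrow> 0"
    unfolding B_def
    by (rule tendsto_integral_cutoff'_zero[OF \<Omega> \<phi>_cont layer V
          continuous_on_derivative_apply[OF \<phi> C1_on_imp_continuous_on[OF G]] tangential
          filterlim_real_sequentially])
  have "A = (\<lambda>m. - B m)"
    unfolding A_def B_def by (rule ext) (rule integral_cutoff_divergence_eq[OF \<Omega> \<phi> V G]; simp)
  then have "A \<longlonglongrightarrow> 0"
    using tendsto_minus[OF B_lim] by simp
  then have "integral \<Omega> (divergence G) = 0"
    using A_lim LIMSEQ_unique by blast
  moreover have "divergence G integrable_on \<Omega>"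
    using \<phi>_cont \<Omega> div_cont
    by (intro integrable_continuous_on_compact_superset[OF _ _ closure_subset])
       (auto simp: compact_closure open_Collect_less continuous_on_const)
  ultimately show ?thesis
    by (metis has_integral_integral)
qed

lemma has_integral_divergence_no_flux:
  fixes G :: "real^'d \<Rightarrow> real^'d"
  assumes \<Omega>: "bounded \<Omega>" and \<nu>: "outer_unit_normal \<Omega> \<nu>" and V: "open V" "closure \<Omega> \<subseteq> V"
    and G: "C1_on V G G'" and no_flux: "\<And>x. x \<in> frontier \<Omega> \<Longrightarrow> G x \<bullet> \<nu> x = 0"
  shows "(divergence G has_integral 0) \<Omega>"
proof -
  obtain \<phi> where \<phi>: "Ck_on 1 UNIV \<phi>" "\<Omega> = {x. \<phi> x < 0}"
    and normal: "\<And>x. x \<in> frontier \<Omega> \<Longrightarrow> grad \<phi> x \<noteq> 0 \<and> \<nu> x = (1 / norm (grad \<phi> x)) *\<^sub>R grad \<phi> x"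
    using \<nu> unfolding outer_unit_normal_def by blast
  define D\<phi> where "D\<phi> x = frechet_derivative \<phi> (at x)" for x
  have C1: "C1_on UNIV \<phi> D\<phi>"
    unfolding D\<phi>_def by (rule Ck_on_1_imp_C1_on[OF \<phi>(1)]) simp
  have D\<phi>_grad: "D\<phi> x h = grad \<phi> x \<bullet> h" for x h
    by (rule derivative_eq_inner_grad[OF C1_on_has_derivative[OF C1 UNIV_I]])
  show ?thesis
  proof (rule has_integral_divergence_tangential[OF \<phi>(2) \<Omega> C1 _ V G])
    show "D\<phi> x \<noteq> (\<lambda>_. 0)" if "x \<in> frontier \<Omega>" for x
    proof
      assume "D\<phi> x = (\<lambda>_. 0)"
      then have "grad \<phi> x \<bullet> grad \<phi> x = 0"
        using D\<phi>_grad[of x "grad \<phi> x"] by simp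
      then show False
        using normal[OF that] by simp
    qed
    show "D\<phi> x (G x) = 0" if "x \<in> frontier \<Omega>" for x
      using no_flux[OF that] normal[OF that] by (simp add: D\<phi>_grad inner_commute)
  qed
qed

section \<open>The energy identity\<close>

lemma has_real_derivative_quadratic_form:
  fixes w :: "nat \<Rightarrow> real \<Rightarrow> real"
  assumes q_sym: "\<And>i j. i \<le> n \<Longrightarrow> j \<le> n \<Longrightarrow> q i j = q j i"
    and w: "\<And>i. i \<le> n \<Longrightarrow> (w i has_real_derivative a i) (at t)"
  shows "((\<lambda>s. (1/2) * (\<Sum>i\<le>n. \<Sum>j\<le>n. q i j * w i s * w j s)) has_real_derivative
      (\<Sum>i\<le>n. a i * (\<Sum>l\<le>n. q i l * w l t))) (at t)"
proof -
  have "((\<lambda>s. q i j * w i s * w j s) has_real_derivative q i j * a i * w j t + q i j * w i t * a j) (at t)"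
    if "i \<le> n" "j \<le> n" for i j
    using DERIV_mult[OF DERIV_cmult[OF w[OF that(1)], of "q i j"] w[OF that(2)]]
    by (simp add: algebra_simps)
  then have "((\<lambda>s. (1/2) * (\<Sum>i\<le>n. \<Sum>j\<le>n. q i j * w i s * w j s)) has_real_derivative
      (1/2) * (\<Sum>i\<le>n. \<Sum>j\<le>n. q i j * a i * w j t + q i j * w i t * a j)) (at t)"
    by (intro DERIV_cmult DERIV_sum) auto
  moreover have "(\<Sum>i\<le>n. \<Sum>j\<le>n. q i j * w i t * a j) = (\<Sum>i\<le>n. \<Sum>j\<le>n. q i j * a i * w j t)"
    by (subst sum.swap) (auto simp: q_sym mult.commute mult.left_commute intro!: sum.cong)
  then have "(1/2) * (\<Sum>i\<le>n. \<Sum>j\<le>n. q i j * a i * w j t + q i j * w i t * a j)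
      = (\<Sum>i\<le>n. \<Sum>j\<le>n. q i j * a i * w j t)"
    by (simp add: sum.distrib)
  also have "\<dots> = (\<Sum>i\<le>n. a i * (\<Sum>l\<le>n. q i l * w l t))"
    by (simp add: sum_distrib_left mult_ac)
  finally show ?thesis
    using DERIV_cong by blast
qed

lemma has_integral_divergence_weighted_flux:
  fixes p U :: "nat \<Rightarrow> real^'d \<Rightarrow> real" and V :: "nat \<Rightarrow> real^'d \<Rightarrow> real^'d"
  assumes \<Omega>: "bounded \<Omega>" "outer_unit_normal \<Omega> \<nu>" and W: "open W" "closure \<Omega> \<subseteq> W"
    and p: "\<And>i. i \<le> n \<Longrightarrow> C1_on W (p i) (p' i)"
    and U: "\<And>i. i \<le> n \<Longrightarrow> C1_on W (U i) (U' i)" and V: "\<And>i. i \<le> n \<Longrightarrow> C1_on W (V i) (V' i)"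
    and no_flux: "\<And>i x. i \<le> n \<Longrightarrow> x \<in> frontier \<Omega> \<Longrightarrow> (U i x *\<^sub>R V i x) \<bullet> \<nu> x = 0"
  shows "(divergence (\<lambda>y. \<Sum>i\<le>n. p i y *\<^sub>R (U i y *\<^sub>R V i y)) has_integral 0) \<Omega>"
proof -
  have "\<exists>G'. C1_on W (\<lambda>y. \<Sum>i\<le>n. p i y *\<^sub>R (U i y *\<^sub>R V i y)) G'"
    by (rule exI, (rule C1_on_sum C1_on_scaleR p U V | simp)+)
  then obtain G' where G: "C1_on W (\<lambda>y. \<Sum>i\<le>n. p i y *\<^sub>R (U i y *\<^sub>R V i y)) G'"
    by blast
  show ?thesis
  proof (rule has_integral_divergence_no_flux[OF \<Omega> W G])
    fix x assume "x \<in> frontier \<Omega>"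
    then have "U i x * (V i x \<bullet> \<nu> x) = 0" if "i \<le> n" for i
      using no_flux[OF that] by simp
    then show "(\<Sum>i\<le>n. p i x *\<^sub>R (U i x *\<^sub>R V i x)) \<bullet> \<nu> x = 0"
      unfolding inner_sum_left by (intro sum.neutral ballI) simp
  qed
qed

lemma integral_energy_identity:
  fixes U :: "nat \<Rightarrow> real^'d \<Rightarrow> real" and V :: "nat \<Rightarrow> real^'d \<Rightarrow> real^'d"
    and k q r :: "nat \<Rightarrow> nat \<Rightarrow> real" and a :: "nat \<Rightarrow> real^'d \<Rightarrow> real"
  assumes \<Omega>: "open \<Omega>" "bounded \<Omega>" "outer_unit_normal \<Omega> \<nu>" and W: "open W" "closure \<Omega> \<subseteq> W"
    and U: "\<And>i. i \<le> n \<Longrightarrow> C1_on W (U i) (U' i)" and V: "\<And>i. i \<le> n \<Longrightarrow> C1_on W (V i) (V' i)"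
    and k_sym: "\<And>i j. i \<le> n \<Longrightarrow> j \<le> n \<Longrightarrow> k i j = k j i"
    and r_eq_q: "\<And>i j. i \<le> n \<Longrightarrow> j \<le> n \<Longrightarrow> r i j = q i j"
    and mass: "\<And>i x. i \<le> n \<Longrightarrow> x \<in> \<Omega> \<Longrightarrow> a i x + divergence (\<lambda>y. U i y *\<^sub>R V i y) x = 0"
    and momentum: "\<And>i x. i \<le> n \<Longrightarrow> x \<in> \<Omega> \<Longrightarrow>
      (\<Sum>j\<le>n. (k i j * U i x * U j x) *\<^sub>R (V i x - V j x)) = momentum_rhs q r n U i x"
    and flux: "\<And>x. x \<in> \<Omega> \<Longrightarrow> (\<Sum>i\<le>n. U i x *\<^sub>R V i x) = 0"
    and no_flux: "\<And>i x. i \<le> n \<Longrightarrow> x \<in> frontier \<Omega> \<Longrightarrow> (U i x *\<^sub>R V i x) \<bullet> \<nu> x = 0"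
  shows "integral \<Omega> (\<lambda>x. \<Sum>i\<le>n. a i x * (\<Sum>l\<le>n. q i l * U l x))
    = - (1/4) * (\<Sum>i\<le>n. \<Sum>j\<le>n. integral \<Omega> (\<lambda>x. k i j * U i x * U j x * (norm (V i x - V j x))\<^sup>2))"
proof -
  define G where "G y = (\<Sum>i\<le>n. (\<Sum>l\<le>n. q i l * U l y) *\<^sub>R (U i y *\<^sub>R V i y))" for y
  define D where "D x = (\<Sum>i\<le>n. \<Sum>j\<le>n. k i j * U i x * U j x * (norm (V i x - V j x))\<^sup>2)" for x
  have \<Omega>_W: "\<Omega> \<subseteq> W"
    using W(2) closure_subset by blast
  have "C1_on W (\<lambda>y. \<Sum>l\<le>n. q i l * U l y) (\<lambda>y h. \<Sum>l\<le>n. q i l * U' l y h)" for i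
    by (intro C1_on_sum C1_on_cmult U) simp
  then have div_G: "(divergence G has_integral 0) \<Omega>"
    unfolding G_def[abs_def] by (rule has_integral_divergence_weighted_flux[OF \<Omega>(2,3) W _ U V no_flux])
  have pointwise: "(\<Sum>i\<le>n. a i x * (\<Sum>l\<le>n. q i l * U l x)) = - (1/4) * D x - divergence G x"
    if "x \<in> \<Omega>" for x
    unfolding D_def G_def[abs_def]
  proof (rule local_energy_identity[OF _ _ k_sym r_eq_q mass[OF _ that] momentum[OF _ that] flux[OF that]])
    show "U i differentiable (at x)" "V i differentiable (at x)" if "i \<le> n" for i
      using C1_on_has_derivative[OF U[OF that]] C1_on_has_derivative[OF V[OF that]] \<Omega>_W \<open>x \<in> \<Omega>\<close>
      by (auto simp: differentiable_def)
  qed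
  have D_int: "(\<lambda>x. k i j * U i x * U j x * (norm (V i x - V j x))\<^sup>2) integrable_on \<Omega>"
    if "i \<le> n" "j \<le> n" for i j
  proof (rule integrable_continuous_on_compact_superset[OF _ _ closure_subset])
    show "continuous_on (closure \<Omega>) (\<lambda>x. k i j * U i x * U j x * (norm (V i x - V j x))\<^sup>2)"
      using that
      by (intro continuous_intros continuous_on_subset[OF C1_on_imp_continuous_on[OF U] W(2)]
          continuous_on_subset[OF C1_on_imp_continuous_on[OF V] W(2)])
  qed (use \<Omega>(1,2) in \<open>auto simp: compact_closure\<close>)
  then have "(\<lambda>x. - (1/4) * D x) integrable_on \<Omega>"
    unfolding D_def by (intro integrable_on_mult_right integrable_sum) auto
  then have "integral \<Omega> (\<lambda>x. - (1/4) * D x - divergence G x)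
      = integral \<Omega> (\<lambda>x. - (1/4) * D x) - integral \<Omega> (divergence G)"
    by (rule integral_diff[OF _ has_integral_integrable[OF div_G]])
  then have "integral \<Omega> (\<lambda>x. \<Sum>i\<le>n. a i x * (\<Sum>l\<le>n. q i l * U l x))
      = integral \<Omega> (\<lambda>x. - (1/4) * D x) - integral \<Omega> (divergence G)"
    using integral_cong[of \<Omega>, OF pointwise] by simp
  also have "\<dots> = - (1/4) * (\<Sum>i\<le>n. \<Sum>j\<le>n. integral \<Omega> (\<lambda>x. k i j * U i x * U j x * (norm (V i x - V j x))\<^sup>2))"
  proof -
    have "integral \<Omega> D = (\<Sum>i\<le>n. integral \<Omega> (\<lambda>x. \<Sum>j\<le>n. k i j * U i x * U j x * (norm (V i x - V j x))\<^sup>2))"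
      unfolding D_def[abs_def] by (rule integral_sum) (auto intro!: integrable_sum D_int)
    also have "\<dots> = (\<Sum>i\<le>n. \<Sum>j\<le>n. integral \<Omega> (\<lambda>x. k i j * U i x * U j x * (norm (V i x - V j x))\<^sup>2))"
      by (intro sum.cong refl integral_sum) (auto intro: D_int)
    finally show ?thesis
      using integral_unique[OF div_G] by simp
  qed
  finally show ?thesis .
qed

lemma has_real_derivative_integral_energy:
  fixes u :: "nat \<Rightarrow> real \<Rightarrow> 'a::euclidean_space \<Rightarrow> real"
  assumes u: "\<And>i. i \<le> n \<Longrightarrow> C1_on U (\<lambda>(s, x). u i s x) (u' i)"
    and U: "{a<..<b} \<times> closure \<Omega> \<subseteq> U" and \<Omega>: "open \<Omega>" "bounded \<Omega>"
    and q_sym: "\<And>i j. i \<le> n \<Longrightarrow> j \<le> n \<Longrightarrow> q i j = q j i" and t: "t \<in> {a<..<b}"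
  shows "((\<lambda>s. integral \<Omega> (\<lambda>x. (1/2) * (\<Sum>i\<le>n. \<Sum>j\<le>n. q i j * u i s x * u j s x)))
    has_real_derivative
      integral \<Omega> (\<lambda>x. \<Sum>i\<le>n. deriv (\<lambda>s. u i s x) t * (\<Sum>l\<le>n. q i l * u l t x))) (at t)"
proof -
  define f where "f i = (\<lambda>(s, x). u i s x)" for i
  define E where "E p = (1/2) * (\<Sum>i\<le>n. \<Sum>j\<le>n. q i j * f i p * f j p)" for p
  have "\<exists>E'. C1_on U E E'"
    unfolding E_def[abs_def] f_def by (rule exI, (rule C1_on_cmult C1_on_sum C1_on_mult u | simp)+)
  then obtain E' where E: "C1_on U E E'"
    by blast
  have E_t: "E' (t, x) (1, 0) = (\<Sum>i\<le>n. deriv (\<lambda>s. u i s x) t * (\<Sum>l\<le>n. q i l * u l t x))"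
    if "x \<in> \<Omega>" for x
  proof -
    have tx: "(t, x) \<in> U"
      using U t that closure_subset by blast
    have u_t: "((\<lambda>s. u i s x) has_real_derivative deriv (\<lambda>s. u i s x) t) (at t)" if "i \<le> n" for i
      using has_real_derivative_slice_fst[OF C1_on_has_derivative[OF u[OF that] tx]]
      by (auto intro: DERIV_imp_deriv[symmetric, THEN subst])
    have "((\<lambda>s. E (s, x)) has_real_derivative
        (\<Sum>i\<le>n. deriv (\<lambda>s. u i s x) t * (\<Sum>l\<le>n. q i l * u l t x))) (at t)"
      unfolding E_def f_def prod.case by (rule has_real_derivative_quadratic_form[OF q_sym u_t])
    then show ?thesis
      using DERIV_unique has_real_derivative_slice_fst[OF C1_on_has_derivative[OF E tx]] by blast
  qed
  have "((\<lambda>s. integral \<Omega> (\<lambda>x. E (s, x))) has_real_derivative integral \<Omega> (\<lambda>x. E' (t, x) (1, 0))) (at t)"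
    by (rule has_real_derivative_integral[OF E U _ closure_subset lmeasurable_open[OF \<Omega>(2,1)] t])
       (simp add: compact_closure \<Omega>(2))
  moreover have "integral \<Omega> (\<lambda>x. E' (t, x) (1, 0))
      = integral \<Omega> (\<lambda>x. \<Sum>i\<le>n. deriv (\<lambda>s. u i s x) t * (\<Sum>l\<le>n. q i l * u l t x))"
    by (rule integral_cong) (rule E_t)
  moreover have "(\<lambda>x. E (s, x)) = (\<lambda>x. (1/2) * (\<Sum>i\<le>n. \<Sum>j\<le>n. q i j * u i s x * u j s x))" for s
    by (simp add: E_def f_def)
  ultimately show ?thesis
    by simp
qed

theorem lemma5:
  fixes \<Omega> :: "(real^'d) set" and \<nu> :: "real^'d \<Rightarrow> real^'d"
    and n :: nat and T :: real
    and k q r :: "nat \<Rightarrow> nat \<Rightarrow> real"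
    and u :: "nat \<Rightarrow> real \<Rightarrow> real^'d \<Rightarrow> real"
    and v :: "nat \<Rightarrow> real \<Rightarrow> real^'d \<Rightarrow> real^'d"
    and U :: "(real \<times> (real^'d)) set"
  assumes dom: "open \<Omega>" "connected \<Omega>" "bounded \<Omega>" "\<Omega> \<noteq> {}"
    and normal: "outer_unit_normal \<Omega> \<nu>"
    and n: "n \<ge> 1" and T: "T > 0"
    and k_sym: "\<And>i j. i \<le> n \<Longrightarrow> j \<le> n \<Longrightarrow> k i j = k j i"
    and k_pos: "\<And>i j. i \<le> n \<Longrightarrow> j \<le> n \<Longrightarrow> i \<noteq> j \<Longrightarrow> k i j > 0"
    and k_diag: "\<And>i. i \<le> n \<Longrightarrow> k i i = 0"
    and q_sym: "\<And>i j. i \<le> n \<Longrightarrow> j \<le> n \<Longrightarrow> q i j = q j i"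
    and q_nonneg: "\<And>i j. i \<le> n \<Longrightarrow> j \<le> n \<Longrightarrow> q i j \<ge> 0"
    and r_eq_q: "\<And>i j. i \<le> n \<Longrightarrow> j \<le> n \<Longrightarrow> r i j = q i j"
    and U: "open U" "{0<..<T} \<times> closure \<Omega> \<subseteq> U"
    and smooth_u: "\<And>i. i \<le> n \<Longrightarrow> smooth_on U (\<lambda>(t, x). u i t x)"
    and smooth_v: "\<And>i. i \<le> n \<Longrightarrow> smooth_on U (\<lambda>(t, x). v i t x)"
    and mass: "\<And>i t x. i \<le> n \<Longrightarrow> t \<in> {0<..<T} \<Longrightarrow> x \<in> \<Omega> \<Longrightarrow>
        deriv (\<lambda>s. u i s x) t + divergence (\<lambda>y. u i t y *\<^sub>R v i t y) x = 0"
    and momentum: "\<And>i t x. i \<le> n \<Longrightarrow> t \<in> {0<..<T} \<Longrightarrow> x \<in> \<Omega> \<Longrightarrow>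
        (\<Sum>j\<le>n. (k i j * u i t x * u j t x) *\<^sub>R (v i t x - v j t x)) =
          - (grad (\<lambda>y. u i t y * (\<Sum>l\<le>n. q i l * u l t y)) x
             - u i t x *\<^sub>R (\<Sum>j\<le>n. grad (\<lambda>y. u j t y * (\<Sum>l\<le>n. q j l * u l t y)) x))
          + ((\<Sum>l\<le>n. r i l * u l t x) *\<^sub>R grad (u i t) x
             - u i t x *\<^sub>R grad (\<lambda>y. \<Sum>l\<le>n. r i l * u l t y) x
             - u i t x *\<^sub>R (\<Sum>j\<le>n. (\<Sum>l\<le>n. r j l * u l t x) *\<^sub>R grad (u j t) x
                   - u j t x *\<^sub>R grad (\<lambda>y. \<Sum>l\<le>n. r j l * u l t y) x))"
    and sum_one: "\<And>t x. t \<in> {0<..<T} \<Longrightarrow> x \<in> \<Omega> \<Longrightarrow> (\<Sum>i\<le>n. u i t x) = 1"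
    and sum_flux: "\<And>t x. t \<in> {0<..<T} \<Longrightarrow> x \<in> \<Omega> \<Longrightarrow> (\<Sum>i\<le>n. u i t x *\<^sub>R v i t x) = 0"
    and no_flux: "\<And>i t x. i \<le> n \<Longrightarrow> t \<in> {0<..<T} \<Longrightarrow> x \<in> frontier \<Omega> \<Longrightarrow>
        (u i t x *\<^sub>R v i t x) \<bullet> \<nu> x = 0"
  shows "\<And>t. t \<in> {0<..<T} \<Longrightarrow>
    ((\<lambda>s. integral \<Omega> (\<lambda>x. (1/2) * (\<Sum>i\<le>n. \<Sum>j\<le>n. q i j * u i s x * u j s x)))
      has_real_derivative
      (- (1/4) * (\<Sum>i\<le>n. \<Sum>j\<le>n. integral \<Omega> (\<lambda>x. k i j * u i t x * u j t x * (norm (v i t x - v j t x))\<^sup>2)))) (at t)"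
proof -
  fix t assume t: "t \<in> {0<..<T}"
  define Ut where "Ut = {x. (t, x) \<in> U}"
  have Ut: "open Ut" "closure \<Omega> \<subseteq> Ut"
    using U t by (auto simp: Ut_def open_vimage[of _ "Pair t", unfolded vimage_def] continuous_on_Pair)
  have u: "C1_on U (\<lambda>(s, x). u i s x) (\<lambda>p. frechet_derivative (\<lambda>(s, x). u i s x) (at p))" if "i \<le> n" for i
    by (rule smooth_on_imp_C1_on[OF smooth_u[OF that] U(1)])
  have v: "C1_on U (\<lambda>(s, x). v i s x) (\<lambda>p. frechet_derivative (\<lambda>(s, x). v i s x) (at p))" if "i \<le> n" for i
    by (rule smooth_on_imp_C1_on[OF smooth_v[OF that] U(1)])
  have u_t: "C1_on Ut (u i t) (\<lambda>x h. frechet_derivative (\<lambda>(s, x). u i s x) (at (t, x)) (0, h))" if "i \<le> n" for i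
    using C1_on_slice[OF u[OF that], of t] by (simp add: Ut_def)
  have v_t: "C1_on Ut (v i t) (\<lambda>x h. frechet_derivative (\<lambda>(s, x). v i s x) (at (t, x)) (0, h))" if "i \<le> n" for i
    using C1_on_slice[OF v[OF that], of t] by (simp add: Ut_def)
  have momentum_t: "\<And>i x. i \<le> n \<Longrightarrow> x \<in> \<Omega> \<Longrightarrow>
      (\<Sum>j\<le>n. (k i j * u i t x * u j t x) *\<^sub>R (v i t x - v j t x)) = momentum_rhs q r n (\<lambda>i. u i t) i x"
    unfolding momentum_rhs_def by (rule momentum[OF _ t])
  have "((\<lambda>s. integral \<Omega> (\<lambda>x. (1/2) * (\<Sum>i\<le>n. \<Sum>j\<le>n. q i j * u i s x * u j s x)))
      has_real_derivative
        integral \<Omega> (\<lambda>x. \<Sum>i\<le>n. deriv (\<lambda>s. u i s x) t * (\<Sum>l\<le>n. q i l * u l t x))) (at t)"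
    using u U(2) dom(1,3) q_sym t by (rule has_real_derivative_integral_energy)
  also have "integral \<Omega> (\<lambda>x. \<Sum>i\<le>n. deriv (\<lambda>s. u i s x) t * (\<Sum>l\<le>n. q i l * u l t x))
      = - (1/4) * (\<Sum>i\<le>n. \<Sum>j\<le>n. integral \<Omega> (\<lambda>x. k i j * u i t x * u j t x * (norm (v i t x - v j t x))\<^sup>2))"
    using dom(1,3) normal Ut u_t v_t k_sym r_eq_q mass[OF _ t] momentum_t sum_flux[OF t] no_flux[OF _ t]
    by (rule integral_energy_identity)
  finally show "((\<lambda>s. integral \<Omega> (\<lambda>x. (1/2) * (\<Sum>i\<le>n. \<Sum>j\<le>n. q i j * u i s x * u j s x)))
      has_real_derivative
      (- (1/4) * (\<Sum>i\<le>n. \<Sum>j\<le>n. integral \<Omega> (\<lambda>x. k i j * u i t x * u j t x * (norm (v i t x - v j t x))\<^sup>2)))) (at t)" .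
qed

end
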